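(* Let $d\ge2$ and let $((G_n),(\rho_n),(\kappa^n_k))$ be a fully compatible, slightly pure and uniform $d$-ary cloning system. Then the subgroup $D_d(G_* )\le\mathscr T_d(G_* )$ is doubly asymptotically commutative: there exist sequences $(a_n)_{n\in\mathbb N},(b_n)_{n\in\mathbb N}$ in $D_d(G_* )$ such that $a_nb_n\ne b_na_n$ for every $n$, and every $h\in D_d(G_* )$ commutes with both $a_n$ and $b_n$ for all but finitely many $n$.
   Context: Cloning system, full compatibility, slight purity, uniformity and the group $\mathscr T_d(G_* )$ of classes $[T,g,U]$ are as follows. For $\sigma\in S_n$, $\zeta^n_k:S_n\to S_{n+d-1}$ is the standard cloning map replacing the $k$-th strand of $\sigma$ by $d$ parallel strands. A $d$-ary cloning system consists of groups $G_n$, homomorphisms $\rho_n:G_n\to S_n$ and injective maps $\kappa^n_k:G_n\to G_{n+d-1}$ ($1\le k\le n$, written on the right) with (C1) $(gh)\kappa^n_k=(g)\kappa^n_{\rho_n(h)k}(h)\kappa^n_k$, (C2) $\kappa^n_l\circ\kappa^{n+d-1}_k=\kappa^n_k\circ\kappa^{n+d-1}_{l+d-1}$ for $k<l$, (C3) $\rho_{n+d-1}((g)\kappa^n_k)(i)=((\rho_n(g))\zeta^n_k)(i)$ for $i\notin\{k,\dots,k+d-1\}$. Fully compatible: (C3) holds for all $i$. Slightly pure: $\rho_n(g)(n)=n$ always. Uniform: $\kappa^n_k\circ\kappa^{n+d-1}_\ell=\kappa^n_k\circ\kappa^{n+d-1}_{\ell'}$ for $k\le\ell\le\ell'\le k+d-1$.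 $\mathscr T_d(G_* )$ consists of classes $[T,g,U]$ ($T,U$ finite rooted $d$-ary trees with $n$ leaves, $g\in G_n$) modulo the equivalence generated by expansions $(T,g,U)\sim(T',(g)\kappa^n_k,U')$, where $U'$ adds a $d$-ary caret to the $k$-th leaf of $U$ and $T'$ adds one to the $\rho_n(g)(k)$-th leaf of $T$; product $[T,g,U][U,h,W]=[T,gh,W]$. For a $d$-ary tree $T$, $\delta_r(T)$ denotes the number of edges from the root to the rightmost leaf. $D_d(G_* )$ is the subgroup of $\mathscr T_d(G_* )$ consisting of the elements $[T,g,U]$ with $\delta_r(T)=\delta_r(U)$ (under the standing hypotheses this is the preimage, under the map $[T,g,U]\mapsto[T,\rho_n(g),U]$ onto a subgroup of the Higman–Thompson group $V_d$, of the kernel of the homomorphism $[T,\sigma,U]\mapsto\delta_r(T)-\delta_r(U)$ defined on the subgroup of $V_d$ of elements fixing the rightmost leaf). *)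

theory Defs
  imports "HOL-Algebra.Sym_Groups"
begin

datatype dtree = Lf | Nd "dtree list"

fun dary :: "nat \<Rightarrow> dtree \<Rightarrow> bool" where
  "dary d Lf = True"
| "dary d (Nd ts) = (length ts = d \<and> (\<forall>t\<in>set ts. dary d t))"

primrec leaves :: "dtree \<Rightarrow> nat" where
  "leaves Lf = 1"
| "leaves (Nd ts) = sum_list (map leaves ts)"

text \<open>Add a d-ary caret to the k-th leaf (leaves numbered 1,2,... from left to right).\<close>
fun add_caret :: "nat \<Rightarrow> nat \<Rightarrow> dtree \<Rightarrow> dtree"
and add_caret_list :: "nat \<Rightarrow> nat \<Rightarrow> dtree list \<Rightarrow> dtree list" where
  "add_caret d k Lf = (if k = 1 then Nd (replicate d Lf) else Lf)"
| "add_caret d k (Nd ts) = Nd (add_caret_list d k ts)"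
| "add_caret_list d k [] = []"
| "add_caret_list d k (t # ts) =
     (if k \<le> leaves t then add_caret d k t # ts else t # add_caret_list d (k - leaves t) ts)"

lemma last_size_le: "ts \<noteq> [] \<Longrightarrow> size (last ts) \<le> size_list size ts"
  by (intro size_list_estimation'[OF last_in_set]) auto

function delta_r :: "dtree \<Rightarrow> nat" where
  "delta_r Lf = 0"
| "delta_r (Nd []) = 0"
| "delta_r (Nd (t # ts)) = 1 + delta_r (last (t # ts))"
  by pat_completeness auto
termination
  by (relation "measure size") (auto dest!: last_size_le)

text \<open>The standard cloning map zeta^n_k on permutations of {1..n}: the k-th strand
  (from k to sigma k) is replaced by d parallel strands.\<close>
definition clone_perm :: "nat \<Rightarrow> nat \<Rightarrow> (nat \<Rightarrow> nat) \<Rightarrow> nat \<Rightarrow> nat" where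
  "clone_perm d k \<sigma> i =
     (let sh = (\<lambda>j. if j < \<sigma> k then j else j + (d - 1)) in
      if i < k then sh (\<sigma> i)
      else if i < k + d then \<sigma> k + (i - k)
      else sh (\<sigma> (i - (d - 1))))"

text \<open>Groups G n (n \<ge> 1), homomorphisms rho n : G n \<rightarrow> S_n, and injective maps
  kappa n k : G n \<rightarrow> G (n+d-1) for 1 \<le> k \<le> n (written on the right in the paper).\<close>
definition cloning_system ::
  "nat \<Rightarrow> (nat \<Rightarrow> 'g monoid) \<Rightarrow> (nat \<Rightarrow> 'g \<Rightarrow> nat \<Rightarrow> nat) \<Rightarrow> (nat \<Rightarrow> nat \<Rightarrow> 'g \<Rightarrow> 'g) \<Rightarrow> bool"
where
  "cloning_system d G \<rho> \<kappa> \<longleftrightarrow>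
     (\<forall>n\<ge>1. group (G n) \<and> \<rho> n \<in> hom (G n) (sym_group n)) \<and>
     (\<forall>n\<ge>1. \<forall>k\<in>{1..n}. \<kappa> n k \<in> carrier (G n) \<rightarrow> carrier (G (n + d - 1))
                        \<and> inj_on (\<kappa> n k) (carrier (G n))) \<and>
     (\<forall>n\<ge>1. \<forall>k\<in>{1..n}. \<forall>g\<in>carrier (G n). \<forall>h\<in>carrier (G n).
        \<kappa> n k (g \<otimes>\<^bsub>G n\<^esub> h) = \<kappa> n (\<rho> n h k) g \<otimes>\<^bsub>G (n + d - 1)\<^esub> \<kappa> n k h) \<and>
     (\<forall>n\<ge>1. \<forall>k l. 1 \<le> k \<and> k < l \<and> l \<le> n \<longrightarrow> (\<forall>g\<in>carrier (G n).
        \<kappa> (n + d - 1) k (\<kappa> n l g) = \<kappa> (n + d - 1) (l + d - 1) (\<kappa> n k g))) \<and>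
     (\<forall>n\<ge>1. \<forall>k\<in>{1..n}. \<forall>g\<in>carrier (G n). \<forall>i. i \<notin> {k..k + d - 1} \<longrightarrow>
        \<rho> (n + d - 1) (\<kappa> n k g) i = clone_perm d k (\<rho> n g) i)"

definition fully_compatible ::
  "nat \<Rightarrow> (nat \<Rightarrow> 'g monoid) \<Rightarrow> (nat \<Rightarrow> 'g \<Rightarrow> nat \<Rightarrow> nat) \<Rightarrow> (nat \<Rightarrow> nat \<Rightarrow> 'g \<Rightarrow> 'g) \<Rightarrow> bool"
where
  "fully_compatible d G \<rho> \<kappa> \<longleftrightarrow>
     (\<forall>n\<ge>1. \<forall>k\<in>{1..n}. \<forall>g\<in>carrier (G n). \<forall>i.
        \<rho> (n + d - 1) (\<kappa> n k g) i = clone_perm d k (\<rho> n g) i)"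

definition slightly_pure :: "(nat \<Rightarrow> 'g monoid) \<Rightarrow> (nat \<Rightarrow> 'g \<Rightarrow> nat \<Rightarrow> nat) \<Rightarrow> bool" where
  "slightly_pure G \<rho> \<longleftrightarrow> (\<forall>n\<ge>1. \<forall>g\<in>carrier (G n). \<rho> n g n = n)"

definition uniform ::
  "nat \<Rightarrow> (nat \<Rightarrow> 'g monoid) \<Rightarrow> (nat \<Rightarrow> nat \<Rightarrow> 'g \<Rightarrow> 'g) \<Rightarrow> bool"
where
  "uniform d G \<kappa> \<longleftrightarrow>
     (\<forall>n\<ge>1. \<forall>k\<in>{1..n}. \<forall>l l'. k \<le> l \<and> l \<le> l' \<and> l' \<le> k + d - 1 \<longrightarrow>
        (\<forall>g\<in>carrier (G n). \<kappa> (n + d - 1) l (\<kappa> n k g) = \<kappa> (n + d - 1) l' (\<kappa> n k g)))"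

type_synonym 'g triple = "dtree \<times> 'g \<times> dtree"

definition valid_triple ::
  "nat \<Rightarrow> (nat \<Rightarrow> 'g monoid) \<Rightarrow> 'g triple \<Rightarrow> bool" where
  "valid_triple d G x = (case x of (T, g, U) \<Rightarrow>
      dary d T \<and> dary d U \<and> leaves T = leaves U \<and> g \<in> carrier (G (leaves U)))"

definition expansion ::
  "nat \<Rightarrow> (nat \<Rightarrow> 'g monoid) \<Rightarrow> (nat \<Rightarrow> 'g \<Rightarrow> nat \<Rightarrow> nat) \<Rightarrow> (nat \<Rightarrow> nat \<Rightarrow> 'g \<Rightarrow> 'g)
     \<Rightarrow> 'g triple \<Rightarrow> 'g triple \<Rightarrow> bool" where
  "expansion d G \<rho> \<kappa> x y = (case x of (T, g, U) \<Rightarrow>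
      valid_triple d G x \<and>
      (\<exists>k\<in>{1..leaves U}. y = (add_caret d (\<rho> (leaves U) g k) T,
                                 \<kappa> (leaves U) k g,
                                 add_caret d k U)))"

definition tclass ::
  "nat \<Rightarrow> (nat \<Rightarrow> 'g monoid) \<Rightarrow> (nat \<Rightarrow> 'g \<Rightarrow> nat \<Rightarrow> nat) \<Rightarrow> (nat \<Rightarrow> nat \<Rightarrow> 'g \<Rightarrow> 'g)
     \<Rightarrow> 'g triple \<Rightarrow> 'g triple set" where
  "tclass d G \<rho> \<kappa> x = {y. equivclp (expansion d G \<rho> \<kappa>) x y}"

definition Td_carrier ::
  "nat \<Rightarrow> (nat \<Rightarrow> 'g monoid) \<Rightarrow> (nat \<Rightarrow> 'g \<Rightarrow> nat \<Rightarrow> nat) \<Rightarrow> (nat \<Rightarrow> nat \<Rightarrow> 'g \<Rightarrow> 'g)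
     \<Rightarrow> 'g triple set set" where
  "Td_carrier d G \<rho> \<kappa> = {tclass d G \<rho> \<kappa> x | x. valid_triple d G x}"

definition Td_mult ::
  "nat \<Rightarrow> (nat \<Rightarrow> 'g monoid) \<Rightarrow> (nat \<Rightarrow> 'g \<Rightarrow> nat \<Rightarrow> nat) \<Rightarrow> (nat \<Rightarrow> nat \<Rightarrow> 'g \<Rightarrow> 'g)
     \<Rightarrow> 'g triple set \<Rightarrow> 'g triple set \<Rightarrow> 'g triple set" where
  "Td_mult d G \<rho> \<kappa> a b =
     (\<Union>{tclass d G \<rho> \<kappa> (T, g \<otimes>\<^bsub>G (leaves U)\<^esub> h, W) | T g U h W.
          (T, g, U) \<in> a \<and> (U, h, W) \<in> b})"

definition Dd_carrier ::
  "nat \<Rightarrow> (nat \<Rightarrow> 'g monoid) \<Rightarrow> (nat \<Rightarrow> 'g \<Rightarrow> nat \<Rightarrow> nat) \<Rightarrow> (nat \<Rightarrow> nat \<Rightarrow> 'g \<Rightarrow> 'g)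
     \<Rightarrow> 'g triple set set" where
  "Dd_carrier d G \<rho> \<kappa> = {tclass d G \<rho> \<kappa> (T, g, U) | T g U.
       valid_triple d G (T, g, U) \<and> delta_r T = delta_r U}"

end

theory Submission
  imports Defs "HOL-Library.Confluence"
begin

text \<open>
  The two sequences consist of classes \<open>[A, 1, B]\<close> whose trees differ only in a small subtree hung
  at depth n below the right spine: \<open>a\<^sub>n\<close> has a caret carrying a second caret at its first resp.
  last leaf there, and \<open>b\<^sub>n\<close> puts the same two trees below the last leaf of an extra caret. The products
  \<open>a\<^sub>n b\<^sub>n\<close> and \<open>b\<^sub>n a\<^sub>n\<close> are again of the form \<open>[A, 1, B]\<close>, and they differ
  because the set of differences of depths of corresponding leaves of A and B is unchanged by
  expansion, yet contains -1 for only one of them.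

  An element \<open>[T, g, U]\<close> of \<open>D\<^sub>d(G\<^sub>*)\<close> has \<open>\<delta>\<^sub>r T = \<delta>\<^sub>r U = m\<close>. For
  \<open>n \<ge> m\<close> it can be expanded below its rightmost leaf into the same region where
  \<open>a\<^sub>n\<close> and \<open>b\<^sub>n\<close> live: by slight purity \<open>\<rho>(g)\<close> fixes that leaf, full compatibility
  keeps every leaf grafted below it fixed, and uniformity makes the group element independent of
  which of the two trees of \<open>a\<^sub>n\<close> (or of \<open>b\<^sub>n\<close>) is grafted. The expanded element then acts
  only outside the grafted part while \<open>a\<^sub>n\<close> and \<open>b\<^sub>n\<close> act only inside it, so they commute.

  That the product of classes can be computed on any composable representatives rests on the
  expansion relation being strongly confluent, which is where (C2) enters, and on two expansions of
  the same triple with equal right trees being equal.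
\<close>

section \<open>Leaf addresses and inner nodes of trees\<close>

fun leaf_addrs :: "dtree \<Rightarrow> nat list list"
and leaf_addrs_list :: "nat \<Rightarrow> dtree list \<Rightarrow> nat list list" where
  "leaf_addrs Lf = [[]]"
| "leaf_addrs (Nd ts) = leaf_addrs_list 0 ts"
| "leaf_addrs_list i [] = []"
| "leaf_addrs_list i (t # ts) = map (Cons i) (leaf_addrs t) @ leaf_addrs_list (Suc i) ts"

fun inner_nodes :: "dtree \<Rightarrow> nat list set"
and inner_nodes_list :: "nat \<Rightarrow> dtree list \<Rightarrow> nat list set" where
  "inner_nodes Lf = {}"
| "inner_nodes (Nd ts) = insert [] (inner_nodes_list 0 ts)"
| "inner_nodes_list i [] = {}"
| "inner_nodes_list i (t # ts) = Cons i ` inner_nodes t \<union> inner_nodes_list (Suc i) ts"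

lemma length_leaf_addrs:
  "length (leaf_addrs t) = leaves t"
  "length (leaf_addrs_list i ts) = sum_list (map leaves ts)"
  by (induction t and i ts rule: leaf_addrs_leaf_addrs_list.induct) auto

lemma leaf_addrs_list_replicate_Lf: "leaf_addrs_list i (replicate m Lf) = map (\<lambda>j. [j]) [i..<i+m]"
  by (induction m arbitrary: i) (auto simp: upt_rec)

lemma inner_nodes_list_replicate_Lf: "inner_nodes_list i (replicate m Lf) = {}"
  by (induction m arbitrary: i) auto

lemma leaf_addrs_add_caret:
  "1 \<le> k \<Longrightarrow> k \<le> leaves t \<Longrightarrow> leaf_addrs (add_caret d k t) =
     take (k - 1) (leaf_addrs t) @ map (\<lambda>j. leaf_addrs t ! (k - 1) @ [j]) [0..<d] @ drop k (leaf_addrs t)"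
  "1 \<le> k \<Longrightarrow> k \<le> sum_list (map leaves ts) \<Longrightarrow> \<forall>i. leaf_addrs_list i (add_caret_list d k ts) =
     take (k - 1) (leaf_addrs_list i ts) @ map (\<lambda>j. leaf_addrs_list i ts ! (k - 1) @ [j]) [0..<d]
       @ drop k (leaf_addrs_list i ts)"
proof (induction d k t and d k ts rule: add_caret_add_caret_list.induct)
  case (4 d k t ts)
  show ?case
  proof (cases "k \<le> leaves t")
    case True
    moreover have "k - 1 < leaves t" using True 4 by simp
    ultimately show ?thesis using 4
      by (simp add: length_leaf_addrs take_append drop_append nth_append take_map drop_map)
  next
    case False
    then have "1 \<le> k - leaves t" "k - leaves t \<le> sum_list (map leaves ts)" "\<not> k - 1 < leaves t"
      using 4 by auto
    then show ?thesis using 4(2) False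
      by (simp add: length_leaf_addrs take_append drop_append nth_append take_map drop_map)
  qed
qed (simp_all add: leaf_addrs_list_replicate_Lf)

lemma inner_nodes_add_caret:
  "1 \<le> k \<Longrightarrow> k \<le> leaves t \<Longrightarrow>
     inner_nodes (add_caret d k t) = insert (leaf_addrs t ! (k - 1)) (inner_nodes t)"
  "1 \<le> k \<Longrightarrow> k \<le> sum_list (map leaves ts) \<Longrightarrow> \<forall>i. inner_nodes_list i (add_caret_list d k ts) =
     insert (leaf_addrs_list i ts ! (k - 1)) (inner_nodes_list i ts)"
proof (induction d k t and d k ts rule: add_caret_add_caret_list.induct)
  case (4 d k t ts)
  show ?case
  proof (cases "k \<le> leaves t")
    case True
    then show ?thesis using 4 by (auto simp: length_leaf_addrs nth_append)
  next
    case False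
    then have "1 \<le> k - leaves t" "k - leaves t \<le> sum_list (map leaves ts)" using 4 by auto
    then show ?thesis using 4(2) False by (auto simp: length_leaf_addrs nth_append)
  qed
qed (auto simp: inner_nodes_list_replicate_Lf)

lemma leaves_add_caret: "1 \<le> k \<Longrightarrow> k \<le> leaves t \<Longrightarrow> leaves (add_caret d k t) = leaves t + d - 1"
  by (simp add: length_leaf_addrs[symmetric] leaf_addrs_add_caret)

lemma dary_add_caret:
  "dary d t \<Longrightarrow> dary d (add_caret d k t)"
  "\<forall>t\<in>set ts. dary d t \<Longrightarrow>
     (\<forall>t\<in>set (add_caret_list d k ts). dary d t) \<and> length (add_caret_list d k ts) = length ts"
  by (induction d k t and d k ts rule: add_caret_add_caret_list.induct) auto

lemma mem_inner_nodes_list: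
  "x \<in> inner_nodes_list i ts \<longleftrightarrow> (\<exists>j a. x = (i + j) # a \<and> j < length ts \<and> a \<in> inner_nodes (ts ! j))"
proof (induction ts arbitrary: i)
  case (Cons t ts)
  show ?case
    unfolding inner_nodes_list.simps Un_iff Cons.IH
    by (auto simp: nth_Cons' split: if_splits)
qed simp

lemma mem_leaf_addrs_list:
  "x \<in> set (leaf_addrs_list i ts) \<longleftrightarrow>
     (\<exists>j a. x = (i + j) # a \<and> j < length ts \<and> a \<in> set (leaf_addrs (ts ! j)))"
proof (induction ts arbitrary: i)
  case (Cons t ts)
  show ?case
    unfolding leaf_addrs_list.simps set_append Un_iff Cons.IH
    by (auto simp: nth_Cons' split: if_splits)
qed simp

lemma Nil_notin_inner_nodes_list [simp]: "[] \<notin> inner_nodes_list i ts"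
  by (simp add: mem_inner_nodes_list)

lemma Nil_notin_leaf_addrs_list [simp]: "[] \<notin> set (leaf_addrs_list i ts)"
  by (simp add: mem_leaf_addrs_list)

lemma Cons_mem_inner_nodes_list_0 [simp]:
  "j # a \<in> inner_nodes_list 0 ts \<longleftrightarrow> j < length ts \<and> a \<in> inner_nodes (ts ! j)"
  by (simp add: mem_inner_nodes_list)

lemma Cons_mem_leaf_addrs_list_0 [simp]:
  "j # a \<in> set (leaf_addrs_list 0 ts) \<longleftrightarrow> j < length ts \<and> a \<in> set (leaf_addrs (ts ! j))"
  by (simp add: mem_leaf_addrs_list)

lemma Nil_inner_nodes_iff: "[] \<in> inner_nodes t \<longleftrightarrow> t \<noteq> Lf"
  by (cases t) auto

lemma finite_inner_nodes: "finite (inner_nodes t)" "finite (inner_nodes_list i ts)"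
  by (induction t and i ts rule: inner_nodes_inner_nodes_list.induct) auto

lemma leaf_addr_notin_inner_nodes: "a \<in> set (leaf_addrs t) \<Longrightarrow> a \<notin> inner_nodes t"
proof (induction t arbitrary: a)
  case (Nd ts)
  then show ?case
    by (cases a) auto
qed simp

lemma inner_nodes_inject: "dary d t \<Longrightarrow> dary d u \<Longrightarrow> inner_nodes t = inner_nodes u \<Longrightarrow> t = u"
proof (induction t arbitrary: u)
  case Lf
  then show ?case using Nil_inner_nodes_iff[of u] by auto
next
  case (Nd ts)
  then obtain vs where u: "u = Nd vs" using Nil_inner_nodes_iff[of u] by (cases u) auto
  have len: "length ts = length vs" using Nd u by simp
  have "ts ! j = vs ! j" if j: "j < length ts" for j
  proof -
    have "a \<in> inner_nodes (ts ! j) \<longleftrightarrow> a \<in> inner_nodes (vs ! j)" for a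
      using Nd.prems(3) j len unfolding u
      by (metis Cons_mem_inner_nodes_list_0 inner_nodes.simps(2) insert_iff list.distinct(1))
    then have "inner_nodes (ts ! j) = inner_nodes (vs ! j)" by blast
    then show ?thesis using Nd j len u by auto
  qed
  then show ?case using len u by (simp add: list_eq_iff_nth_eq)
qed

lemma leaf_addr_in_inner_nodes_if_psubset:
  "dary d u \<Longrightarrow> dary d v \<Longrightarrow> inner_nodes u \<subset> inner_nodes v \<Longrightarrow>
     \<exists>a\<in>set (leaf_addrs u). a \<in> inner_nodes v"
proof (induction u arbitrary: v)
  case Lf
  then show ?case using Nil_inner_nodes_iff[of v] by auto
next
  case (Nd ts)
  then obtain vs where v: "v = Nd vs" using Nil_inner_nodes_iff[of v] by (cases v) auto
  have len: "length ts = length vs" using Nd v by simp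
  obtain x where x: "x \<in> inner_nodes v" "x \<notin> inner_nodes (Nd ts)" using Nd.prems(3) by blast
  then obtain j a where ja: "x = j # a" using v by (cases x) auto
  have j: "j < length ts" "a \<in> inner_nodes (vs ! j)" "a \<notin> inner_nodes (ts ! j)"
    using x ja len v by auto
  have "inner_nodes (ts ! j) \<subseteq> inner_nodes (vs ! j)"
  proof
    fix y assume "y \<in> inner_nodes (ts ! j)"
    then have "j # y \<in> inner_nodes (Nd ts)" using j(1) by simp
    then have "j # y \<in> inner_nodes (Nd vs)" using Nd.prems(3) v by blast
    then show "y \<in> inner_nodes (vs ! j)" by simp
  qed
  moreover have "dary d (ts ! j)" "dary d (vs ! j)" using Nd.prems j len v by auto
  ultimately obtain b where "b \<in> set (leaf_addrs (ts ! j))" "b \<in> inner_nodes (vs ! j)"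
    using Nd.IH[of "ts ! j" "vs ! j"] j by auto
  then show ?case using j v len by (intro bexI[of _ "j # b"]) auto
qed

lemma leaves_gt_0: "0 < d \<Longrightarrow> dary d t \<Longrightarrow> 0 < leaves t"
proof (induction t)
  case (Nd ts)
  then obtain t where "t \<in> set ts" by (cases ts) auto
  then show ?case using Nd by (auto simp: sum_list_map_remove1[of t])
qed simp

lemma leaf_addrs_add_caret_nth_less:
  assumes "1 \<le> k" "k < l" "l \<le> leaves U"
  shows "leaf_addrs (add_caret d l U) ! (k - 1) = leaf_addrs U ! (k - 1)"
proof -
  have "k - 1 < l - 1" "length (leaf_addrs U) = leaves U" using assms by (auto simp: length_leaf_addrs)
  then show ?thesis using assms by (simp add: leaf_addrs_add_caret nth_append)
qed

lemma leaf_addrs_add_caret_nth_greater: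
  assumes "1 \<le> k" "k < l" "l \<le> leaves U"
  shows "leaf_addrs (add_caret d k U) ! (l + d - 2) = leaf_addrs U ! (l - 1)"
proof -
  have "\<not> l + d - 2 < k - 1" "\<not> l + d - 2 - (k - 1) < d" "k + (l + d - 2 - (k - 1) - d) = l - 1"
    "length (leaf_addrs U) = leaves U" using assms by (auto simp: length_leaf_addrs)
  then show ?thesis using assms by (simp add: leaf_addrs_add_caret nth_append)
qed

lemma add_caret_commute:
  assumes "dary d U" "1 \<le> k" "k < l" "l \<le> leaves U"
  shows "add_caret d k (add_caret d l U) = add_caret d (l + d - 1) (add_caret d k U)"
proof (rule inner_nodes_inject[of d])
  have "l + d - 1 - 1 = l + d - 2" by simp
  then show "inner_nodes (add_caret d k (add_caret d l U))
      = inner_nodes (add_caret d (l + d - 1) (add_caret d k U))"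
    using assms leaf_addrs_add_caret_nth_less[OF assms(2-4)] leaf_addrs_add_caret_nth_greater[OF assms(2-4)]
    by (auto simp: inner_nodes_add_caret leaves_add_caret)
qed (use assms dary_add_caret(1) in blast)+

section \<open>Combs, grafting and caret extensions\<close>

declare sum_list_replicate [simp]

lemma add_caret_0: "add_caret d 0 t = t" "add_caret_list d 0 ts = ts"
  by (induction d "0::nat" t and d "0::nat" ts rule: add_caret_add_caret_list.induct) auto

lemma add_caret_list_append:
  "add_caret_list d k (xs @ ys) =
     (if k \<le> sum_list (map leaves xs) then add_caret_list d k xs @ ys
      else xs @ add_caret_list d (k - sum_list (map leaves xs)) ys)"
  by (induction xs arbitrary: k) (auto simp: add_caret_0)

lemma add_caret_list_shift:
  "1 \<le> k \<Longrightarrow> add_caret_list d (sum_list (map leaves xs) + k) (xs @ ys) = xs @ add_caret_list d k ys"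
  by (simp add: add_caret_list_append)

lemma add_caret_list_replicate_Lf:
  "1 \<le> k \<Longrightarrow> k \<le> m \<Longrightarrow> add_caret_list d k (replicate m Lf) =
     replicate (k - 1) Lf @ [Nd (replicate d Lf)] @ replicate (m - k) Lf"
proof (induction m arbitrary: k)
  case (Suc m)
  show ?case
  proof (cases "k = 1")
    case False
    then have k: "1 \<le> k - 1" "k - 1 \<le> m" using Suc.prems by auto
    then have "Lf # replicate (k - 1 - 1) Lf = replicate (k - 1) Lf" by (cases "k - 1") auto
    then show ?thesis using Suc.IH[OF k] Suc.prems False by (cases k) auto
  qed simp
qed simp

lemma length_add_caret_list: "length (add_caret_list d k ts) = length ts"
  by (induction ts arbitrary: k) auto

lemma dary_Nd_obtain_snoc:
  assumes "0 < d" "dary d (Nd ts)"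
  obtains xs t where "ts = xs @ [t]"
  using assms by (cases ts rule: rev_cases) auto

lemma delta_r_Nd_snoc: "delta_r (Nd (ys @ [u])) = 1 + delta_r u"
  by (cases ys) auto

fun rcomb :: "nat \<Rightarrow> nat \<Rightarrow> dtree \<Rightarrow> dtree" where
  "rcomb d 0 S = S"
| "rcomb d (Suc n) S = Nd (replicate (d - 1) Lf @ [rcomb d n S])"

lemma rcomb_rcomb: "rcomb d m (rcomb d j S) = rcomb d (m + j) S"
  by (induction m) auto

lemma leaves_rcomb: "leaves (rcomb d n S) = n * (d - 1) + leaves S"
  by (induction n) auto

lemma dary_rcomb: "0 < d \<Longrightarrow> dary d S \<Longrightarrow> dary d (rcomb d n S)"
  by (induction n) auto

lemma delta_r_rcomb: "delta_r (rcomb d n S) = n + delta_r S"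
  by (induction n) (auto simp: delta_r_Nd_snoc)

lemma add_caret_rcomb:
  assumes "1 \<le> k" "k \<le> leaves S"
  shows "add_caret d (n * (d - 1) + k) (rcomb d n S) = rcomb d n (add_caret d k S)"
proof (induction n)
  case (Suc n)
  have "Suc n * (d - 1) + k = sum_list (map leaves (replicate (d - 1) Lf)) + (n * (d - 1) + k)"
    by simp
  then show ?case
    using Suc assms
    by (simp only: rcomb.simps add_caret.simps add_caret_list_shift) (simp add: leaves_rcomb)
qed simp

lemma rcomb_Suc_Lf: "1 \<le> d \<Longrightarrow> rcomb d (Suc j) Lf = add_caret d (j * (d - 1) + 1) (rcomb d j Lf)"
proof -
  assume "1 \<le> d"
  then have "add_caret d 1 Lf = rcomb d 1 Lf" by (cases d) (auto simp: replicate_append_same)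
  then show ?thesis using add_caret_rcomb[of 1 Lf d j] rcomb_rcomb[of d j 1 Lf] by simp
qed

fun graft_last :: "dtree \<Rightarrow> dtree \<Rightarrow> dtree"
and graft_last_list :: "dtree list \<Rightarrow> dtree \<Rightarrow> dtree list" where
  "graft_last Lf S = S"
| "graft_last (Nd ts) S = Nd (graft_last_list ts S)"
| "graft_last_list [] S = []"
| "graft_last_list [t] S = [graft_last t S]"
| "graft_last_list (t # u # ts) S = t # graft_last_list (u # ts) S"

lemma graft_last_list_snoc: "graft_last_list (xs @ [t]) S = xs @ [graft_last t S]"
  by (induction xs rule: induct_list012) auto

lemma graft_last_Lf: "graft_last U Lf = U" "graft_last_list ts Lf = ts"
  by (induction U Lf and ts Lf rule: graft_last_graft_last_list.induct) auto

lemma rcomb_eq_graft_last: "rcomb d m S = graft_last (rcomb d m Lf) S"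
  by (induction m) (simp_all add: graft_last_list_snoc)

lemma dary_graft_last:
  assumes "0 < d" "dary d U" "dary d S"
  shows "dary d (graft_last U S)" and "leaves (graft_last U S) + 1 = leaves U + leaves S"
  using assms(2)
proof (induction U)
  case (Nd ts)
  { case 1 obtain xs t where "ts = xs @ [t]" using dary_Nd_obtain_snoc[OF assms(1) 1] .
    then show ?case using 1 Nd.IH(1)[of t] by (simp add: graft_last_list_snoc) }
  { case 2 obtain xs t where "ts = xs @ [t]" using dary_Nd_obtain_snoc[OF assms(1) 2] .
    then show ?case using 2 Nd.IH(2)[of t] by (simp add: graft_last_list_snoc) }
qed (use assms in simp_all)

lemma add_caret_graft_last_right:
  assumes "0 < d" "dary d U" "dary d S" "1 \<le> k" "k \<le> leaves S"
  shows "add_caret d (leaves U - 1 + k) (graft_last U S) = graft_last U (add_caret d k S)"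
  using assms(2)
proof (induction U)
  case (Nd ts)
  obtain xs t where ts: "ts = xs @ [t]" using dary_Nd_obtain_snoc[OF assms(1) Nd.prems] .
  have dt: "dary d t" using Nd.prems ts by simp
  have lt: "1 \<le> leaves t" using leaves_gt_0[OF assms(1) dt] by simp
  have IH: "add_caret d (leaves t - 1 + k) (graft_last t S) = graft_last t (add_caret d k S)"
    using Nd.IH dt ts by simp
  have "leaves (graft_last t S) + 1 = leaves t + leaves S"
    using dary_graft_last(2)[OF assms(1) dt assms(3)] .
  then have "1 \<le> leaves t - 1 + k" "leaves t - 1 + k \<le> leaves (graft_last t S)" using lt assms(4,5) by auto
  moreover have "leaves (Nd ts) - 1 + k = sum_list (map leaves xs) + (leaves t - 1 + k)" using ts lt by simp
  ultimately show ?case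
    using ts IH
    by (simp only: graft_last.simps graft_last_list_snoc add_caret.simps add_caret_list_shift) simp
qed simp

lemma add_caret_graft_last_left:
  assumes "0 < d" "dary d U" "dary d S" "1 \<le> k" "k < leaves U"
  shows "add_caret d k (graft_last U S) = graft_last (add_caret d k U) S"
  using assms(2,4,5)
proof (induction U arbitrary: k)
  case (Nd ts)
  obtain xs t where ts: "ts = xs @ [t]" using dary_Nd_obtain_snoc[OF assms(1) Nd.prems(1)] .
  have dt: "dary d t" using Nd.prems ts by simp
  have lg: "leaves (graft_last t S) + 1 = leaves t + leaves S"
    using dary_graft_last(2)[OF assms(1) dt assms(3)] .
  have lS: "1 \<le> leaves S" using leaves_gt_0[OF assms(1) assms(3)] by simp
  show ?case
  proof (cases "k \<le> sum_list (map leaves xs)")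
    case True
    then show ?thesis
      using ts by (simp add: graft_last_list_snoc add_caret_list_append length_add_caret_list)
  next
    case False
    define k' where "k' = k - sum_list (map leaves xs)"
    have k': "1 \<le> k'" "k' < leaves t" "k' \<le> leaves (graft_last t S)"
      using False Nd.prems(3) ts lg lS by (auto simp: k'_def)
    have "add_caret d k' (graft_last t S) = graft_last (add_caret d k' t) S"
      using Nd.IH[of t k'] dt ts k' by simp
    then show ?thesis
      using ts False k' by (simp add: graft_last_list_snoc add_caret_list_append k'_def[symmetric])
  qed
qed simp

inductive caret_ext :: "nat \<Rightarrow> dtree \<Rightarrow> dtree \<Rightarrow> bool" for d where
  caret_ext_refl: "caret_ext d A A"
| caret_ext_step: "caret_ext d A B \<Longrightarrow> 1 \<le> k \<Longrightarrow> k \<le> leaves B \<Longrightarrow> caret_ext d A (add_caret d k B)"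

text \<open>Carets off the rightmost leaf commute with grafting at the rightmost leaf.\<close>

inductive caret_ext_left :: "nat \<Rightarrow> dtree \<Rightarrow> dtree \<Rightarrow> bool" for d where
  caret_ext_left_refl: "caret_ext_left d A A"
| caret_ext_left_step: "caret_ext_left d A B \<Longrightarrow> 1 \<le> k \<Longrightarrow> k < leaves B \<Longrightarrow> caret_ext_left d A (add_caret d k B)"

lemma caret_ext_trans: "caret_ext d B C \<Longrightarrow> caret_ext d A B \<Longrightarrow> caret_ext d A C"
  by (induction rule: caret_ext.induct) (auto intro: caret_ext_step)

lemma caret_ext_left_trans: "caret_ext_left d B C \<Longrightarrow> caret_ext_left d A B \<Longrightarrow> caret_ext_left d A C"
  by (induction rule: caret_ext_left.induct) (auto intro: caret_ext_left_step)

lemma dary_caret_ext_left: "caret_ext_left d P Q \<Longrightarrow> dary d P \<Longrightarrow> dary d Q"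
  by (induction rule: caret_ext_left.induct) (auto intro: dary_add_caret)

lemma card_Diff_psubset_less: "A \<subset> B \<Longrightarrow> B \<subseteq> C \<Longrightarrow> finite C \<Longrightarrow> card (C - B) < card (C - A)"
  by (rule psubset_card_mono) auto

lemma caret_ext_if_inner_nodes_subset:
  "0 < d \<Longrightarrow> dary d A \<Longrightarrow> dary d B \<Longrightarrow> inner_nodes A \<subseteq> inner_nodes B \<Longrightarrow> caret_ext d A B"
proof (induction "card (inner_nodes B - inner_nodes A)" arbitrary: A rule: less_induct)
  case less
  show ?case
  proof (cases "inner_nodes A = inner_nodes B")
    case True
    then show ?thesis using inner_nodes_inject[OF less(3,4)] caret_ext_refl by simp
  next
    case False
    then obtain a where a: "a \<in> set (leaf_addrs A)" "a \<in> inner_nodes B"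
      using leaf_addr_in_inner_nodes_if_psubset[OF less(3,4)] less(5) by blast
    then obtain i where i: "i < leaves A" "a = leaf_addrs A ! i"
      by (auto simp: in_set_conv_nth length_leaf_addrs)
    let ?A1 = "add_caret d (Suc i) A"
    have A1: "inner_nodes ?A1 = insert a (inner_nodes A)" using i by (simp add: inner_nodes_add_caret)
    have "card (inner_nodes B - inner_nodes ?A1) < card (inner_nodes B - inner_nodes A)"
      using card_Diff_psubset_less[of "inner_nodes A" "inner_nodes ?A1" "inner_nodes B"] A1
        leaf_addr_notin_inner_nodes[OF a(1)] a(2) less(5) finite_inner_nodes(1)
      by auto
    moreover have "dary d ?A1" using less(3) by (rule dary_add_caret)
    moreover have "inner_nodes ?A1 \<subseteq> inner_nodes B" using A1 a(2) less(5) by auto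
    ultimately have "caret_ext d ?A1 B" using less(1,2,4) by blast
    then show ?thesis using caret_ext_trans caret_ext_step[OF caret_ext_refl, of "Suc i" A] i by simp
  qed
qed

lemma caret_ext_left_Nd_snoc: "caret_ext_left d P Q \<Longrightarrow> caret_ext_left d (Nd (xs @ [P])) (Nd (xs @ [Q]))"
proof (induction rule: caret_ext_left.induct)
  case (caret_ext_left_step A B k)
  have "add_caret d (sum_list (map leaves xs) + k) (Nd (xs @ [B])) = Nd (xs @ [add_caret d k B])"
    using caret_ext_left_step by (simp add: add_caret_list_shift)
  then show ?case
    using caret_ext_left.caret_ext_left_step[OF caret_ext_left_step.IH, of "sum_list (map leaves xs) + k"]
      caret_ext_left_step(2,3) by simp
qed (rule caret_ext_left_refl)

lemma caret_ext_left_Nd_middle: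
  "caret_ext d A B \<Longrightarrow> 1 \<le> sum_list (map leaves ys) \<Longrightarrow>
     caret_ext_left d (Nd (xs @ A # ys)) (Nd (xs @ B # ys))"
proof (induction rule: caret_ext.induct)
  case (caret_ext_step A' B k)
  have "add_caret d (sum_list (map leaves xs) + k) (Nd (xs @ B # ys)) = Nd (xs @ add_caret d k B # ys)"
    using caret_ext_step by (simp add: add_caret_list_shift)
  then show ?case
    using caret_ext_left.caret_ext_left_step[OF caret_ext_step.IH, of "sum_list (map leaves xs) + k"]
      caret_ext_step by simp
qed (rule caret_ext_left_refl)

lemma caret_ext_left_fill:
  "\<forall>x\<in>set xs. dary d x \<Longrightarrow> 0 < d \<Longrightarrow> 1 \<le> sum_list (map leaves ys) \<Longrightarrow>
     caret_ext_left d (Nd (pre @ replicate (length xs) Lf @ ys)) (Nd (pre @ xs @ ys))"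
proof (induction xs arbitrary: pre)
  case (Cons x xs)
  have "caret_ext d Lf x" using caret_ext_if_inner_nodes_subset[of d Lf x] Cons.prems(1,2) by simp
  then have "caret_ext_left d (Nd (pre @ Lf # (replicate (length xs) Lf @ ys)))
      (Nd (pre @ x # (replicate (length xs) Lf @ ys)))"
    using caret_ext_left_Nd_middle Cons.prems(3) by simp
  moreover have "caret_ext_left d (Nd ((pre @ [x]) @ replicate (length xs) Lf @ ys)) (Nd ((pre @ [x]) @ xs @ ys))"
    using Cons.IH[of "pre @ [x]"] Cons.prems by simp
  ultimately show ?case using caret_ext_left_trans by simp
qed (simp add: caret_ext_left_refl)

lemma caret_ext_left_rcomb_delta_r: "0 < d \<Longrightarrow> dary d U \<Longrightarrow> caret_ext_left d (rcomb d (delta_r U) Lf) U"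
proof (induction U)
  case (Nd ts)
  obtain xs t where ts: "ts = xs @ [t]" using dary_Nd_obtain_snoc[OF Nd.prems] .
  have dt: "dary d t" and len: "length xs = d - 1" using Nd.prems ts by auto
  have "caret_ext_left d (Nd (replicate (d - 1) Lf @ [rcomb d (delta_r t) Lf])) (Nd (replicate (d - 1) Lf @ [t]))"
    using caret_ext_left_Nd_snoc Nd.IH[of t] ts dt Nd.prems(1) by simp
  moreover have "caret_ext_left d (Nd ([] @ replicate (length xs) Lf @ [t])) (Nd ([] @ xs @ [t]))"
    using caret_ext_left_fill[of xs d "[t]" "[]"] Nd.prems leaves_gt_0[OF Nd.prems(1) dt] ts by simp
  ultimately show ?case using caret_ext_left_trans len ts by (simp add: delta_r_Nd_snoc)
qed (simp add: caret_ext_left_refl)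

section \<open>Depths of leaves\<close>

definition leaf_depths :: "dtree \<Rightarrow> nat list" where
  "leaf_depths t = map length (leaf_addrs t)"

definition pair_diffs :: "nat list \<Rightarrow> nat list \<Rightarrow> int set" where
  "pair_diffs xs ys = (\<lambda>(a, b). int a - int b) ` set (zip xs ys)"

text \<open>Simultaneous caret additions to A and B preserve \<open>depth_diffs A B\<close>, so it separates
  classes \<open>[A, 1, B]\<close>.\<close>

definition depth_diffs :: "dtree \<Rightarrow> dtree \<Rightarrow> int set" where
  "depth_diffs A B = pair_diffs (leaf_depths A) (leaf_depths B)"

lemma length_leaf_depths: "length (leaf_depths t) = leaves t"
  by (simp add: leaf_depths_def length_leaf_addrs)

lemma leaf_depths_Lf [simp]: "leaf_depths Lf = [0]"
  by (simp add: leaf_depths_def)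

lemma leaf_depths_Nd [simp]: "leaf_depths (Nd ts) = concat (map (\<lambda>t. map Suc (leaf_depths t)) ts)"
proof -
  have "map length (leaf_addrs_list i ts) = concat (map (\<lambda>t. map Suc (leaf_depths t)) ts)" for i
    by (induction ts arbitrary: i) (auto simp: leaf_depths_def)
  then show ?thesis by (simp add: leaf_depths_def)
qed

lemma concat_replicate_singleton [simp]: "concat (replicate m [x]) = replicate m x"
  by (induction m) auto

lemma pair_diffs_append:
  "length xs = length ys \<Longrightarrow> pair_diffs (xs @ xs') (ys @ ys') = pair_diffs xs ys \<union> pair_diffs xs' ys'"
  by (simp add: pair_diffs_def image_Un)

lemma pair_diffs_map_Suc: "pair_diffs (map Suc xs) (map Suc ys) = pair_diffs xs ys"
  by (simp add: pair_diffs_def zip_map_map image_image split_def)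

lemma pair_diffs_replicate:
  "pair_diffs (replicate m a) (replicate m b) = (if m = 0 then {} else {int a - int b})"
  by (simp add: pair_diffs_def)

lemma pair_diffs_Cons: "pair_diffs (a # xs) (b # ys) = insert (int a - int b) (pair_diffs xs ys)"
  by (simp add: pair_diffs_def)

lemma pair_diffs_singleton: "pair_diffs [a] [b] = {int a - int b}"
  by (simp add: pair_diffs_def)

lemma leaf_depths_add_caret:
  assumes "1 \<le> k" "k \<le> leaves t"
  shows "leaf_depths (add_caret d k t) =
    take (k - 1) (leaf_depths t) @ replicate d (leaf_depths t ! (k - 1) + 1) @ drop k (leaf_depths t)"
  using assms by (simp add: leaf_depths_def length_leaf_addrs leaf_addrs_add_caret take_map drop_map
      map_replicate_const o_def)

lemma depth_diffs_add_caret: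
  assumes "0 < d" "leaves A = leaves B" "1 \<le> k" "k \<le> leaves B"
  shows "depth_diffs (add_caret d k A) (add_caret d k B) = depth_diffs A B"
proof -
  let ?xs = "leaf_depths A" and ?ys = "leaf_depths B" and ?i = "k - 1"
  have len: "length ?xs = length ?ys" "?i < length ?xs" using assms by (auto simp: length_leaf_depths)
  have "depth_diffs (add_caret d k A) (add_caret d k B) =
      pair_diffs (take ?i ?xs) (take ?i ?ys) \<union> pair_diffs [?xs ! ?i] [?ys ! ?i]
        \<union> pair_diffs (drop k ?xs) (drop k ?ys)"
    using assms len
    by (simp add: depth_diffs_def leaf_depths_add_caret pair_diffs_append pair_diffs_replicate
        pair_diffs_singleton Un_assoc)
  also have "\<dots> = pair_diffs (take ?i ?xs @ [?xs ! ?i] @ drop k ?xs) (take ?i ?ys @ [?ys ! ?i] @ drop k ?ys)"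
    using len pair_diffs_append[of "[?xs ! ?i]" "[?ys ! ?i]" "drop k ?xs" "drop k ?ys"]
    by (simp add: pair_diffs_append Un_assoc)
  also have "\<dots> = depth_diffs A B"
    using id_take_nth_drop[of ?i ?xs] id_take_nth_drop[of ?i ?ys] len assms by (simp add: depth_diffs_def)
  finally show ?thesis .
qed

section \<open>The trees defining the two sequences\<close>

definition caret :: "nat \<Rightarrow> dtree" where
  "caret d = Nd (replicate d Lf)"

definition caret_first :: "nat \<Rightarrow> dtree" where
  "caret_first d = Nd (caret d # replicate (d - 1) Lf)"

definition caret_last :: "nat \<Rightarrow> dtree" where
  "caret_last d = rcomb d 1 (caret d)"

definition caret_pair :: "nat \<Rightarrow> dtree \<Rightarrow> dtree" where
  "caret_pair d S = Nd (caret d # replicate (d - 2) Lf @ [S])"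

definition spine_tree :: "nat \<Rightarrow> nat \<Rightarrow> dtree \<Rightarrow> dtree" where
  "spine_tree d n Z = rcomb d n (Nd (Z # replicate (d - 1) Lf))"

lemma replicate_snoc: "0 < m \<Longrightarrow> replicate m x = replicate (m - 1) x @ [x]"
  by (cases m) (auto simp: replicate_append_same)

lemma replicate_Cons: "0 < m \<Longrightarrow> replicate m x = x # replicate (m - 1) x"
  by (cases m) auto

lemma add_caret_spine_tree:
  "1 \<le> k \<Longrightarrow> k \<le> leaves Z \<Longrightarrow> add_caret d (n * (d - 1) + k) (spine_tree d n Z)
      = spine_tree d n (add_caret d k Z)"
  unfolding spine_tree_def by (subst add_caret_rcomb) simp_all

lemma leaves_spine_tree: "leaves (spine_tree d n Z) = n * (d - 1) + leaves Z + (d - 1)"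
  by (simp add: spine_tree_def leaves_rcomb)

lemma spine_tree_Lf: "spine_tree d j Lf = rcomb d (Suc j) Lf"
  using rcomb_rcomb[of d j 1 Lf] by (simp add: spine_tree_def replicate_append_same)

lemma spine_tree_eq_graft_last:
  assumes "m \<le> n"
  shows "spine_tree d n Z = graft_last (rcomb d m Lf) (spine_tree d (n - m) Z)"
proof -
  have "spine_tree d n Z = rcomb d m (spine_tree d (n - m) Z)"
    using rcomb_rcomb[of d m "n - m"] assms by (simp add: spine_tree_def)
  then show ?thesis by (simp only: rcomb_eq_graft_last[of d m "spine_tree d (n - m) Z"])
qed

lemma depth_diffs_Nd_replicate_snoc:
  "leaves P = leaves Q \<Longrightarrow> depth_diffs (Nd (replicate m Lf @ [P])) (Nd (replicate m Lf @ [Q])) =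
     (if m = 0 then depth_diffs P Q else insert 0 (depth_diffs P Q))"
  by (simp add: depth_diffs_def pair_diffs_append pair_diffs_map_Suc pair_diffs_replicate length_leaf_depths
      map_replicate)

lemma depth_diffs_Nd_Cons_replicate:
  "leaves P = leaves Q \<Longrightarrow> depth_diffs (Nd (P # replicate m Lf)) (Nd (Q # replicate m Lf)) =
     (if m = 0 then depth_diffs P Q else insert 0 (depth_diffs P Q))"
  using pair_diffs_append[of "map Suc (leaf_depths P)" "map Suc (leaf_depths Q)"
      "replicate m 1" "replicate m 1"]
  by (auto simp: depth_diffs_def pair_diffs_map_Suc pair_diffs_replicate length_leaf_depths map_replicate)

context
  fixes d :: nat
  assumes d2: "2 \<le> d"
begin

lemma leaves_caret [simp]: "leaves (caret d) = d"
  by (simp add: caret_def)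

lemma leaves_caret_first [simp]: "leaves (caret_first d) = 2 * d - 1"
  using d2 by (simp add: caret_first_def)

lemma leaves_caret_last [simp]: "leaves (caret_last d) = 2 * d - 1"
  using d2 by (simp add: caret_last_def)

lemma dary_caret: "dary d (caret d)"
  by (simp add: caret_def)

lemma dary_caret_first: "dary d (caret_first d)"
  using d2 by (simp add: caret_first_def caret_def)

lemma dary_caret_last: "dary d (caret_last d)"
  using d2 by (simp add: caret_last_def caret_def)

lemma dary_spine_tree: "dary d Z \<Longrightarrow> dary d (spine_tree d n Z)"
  using d2 by (auto simp: spine_tree_def intro!: dary_rcomb)

lemma dary_caret_pair: "dary d S \<Longrightarrow> dary d (caret_pair d S)"
  using d2 by (simp add: caret_pair_def caret_def)

lemma delta_r_spine_tree: "delta_r (spine_tree d n Z) = Suc n"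
proof -
  have "Z # replicate (d - 1) Lf = (Z # replicate (d - 2) Lf) @ [Lf]"
    using d2 replicate_snoc[of "d - 1" Lf] by simp
  then show ?thesis by (simp add: spine_tree_def delta_r_rcomb delta_r_Nd_snoc)
qed

lemma depth_diffs_spine_tree:
  "leaves P = leaves Q \<Longrightarrow> depth_diffs (spine_tree d n P) (spine_tree d n Q) = insert 0 (depth_diffs P Q)"
proof (induction n)
  case 0
  then show ?case using depth_diffs_Nd_Cons_replicate[of P Q "d - 1"] d2 by (simp add: spine_tree_def)
next
  case (Suc n)
  then show ?case
    using depth_diffs_Nd_replicate_snoc[of "rcomb d n (Nd (P # replicate (d - 1) Lf))"
        "rcomb d n (Nd (Q # replicate (d - 1) Lf))" "d - 1"] d2
    by (simp add: spine_tree_def leaves_rcomb)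
qed

lemma add_caret_caret_1: "add_caret d 1 (caret d) = caret_first d"
  using d2 by (simp add: caret_def caret_first_def add_caret_list_replicate_Lf)

lemma add_caret_caret_d: "add_caret d d (caret d) = caret_last d"
  using d2 by (simp add: caret_def caret_last_def add_caret_list_replicate_Lf)

lemma add_caret_caret_first_d: "add_caret d d (caret_first d) = Nd (caret_last d # replicate (d - 1) Lf)"
  using d2 add_caret_caret_d by (simp add: caret_first_def)

lemma caret_first_eq_caret_pair: "caret_first d = caret_pair d Lf"
  using d2 replicate_snoc[of "d - 1" Lf] by (simp add: caret_first_def caret_pair_def)

lemma add_caret_rcomb_1: "add_caret d 1 (rcomb d 1 S) = caret_pair d S"
  using d2 replicate_Cons[of "d - 1" Lf] by (simp add: caret_pair_def caret_def)

lemma add_caret_caret_pair: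
  assumes "1 \<le> k" "k \<le> leaves S"
  shows "add_caret d (2 * d - 2 + k) (caret_pair d S) = caret_pair d (add_caret d k S)"
proof -
  have "2 * d - 2 + k = sum_list (map leaves (caret d # replicate (d - 2) Lf)) + k" using d2 by simp
  then show ?thesis using assms unfolding caret_pair_def
    by (simp only: add_caret.simps append_Cons[symmetric] add_caret_list_shift) simp
qed

lemma add_caret_caret_last_last: "add_caret d (2 * d - 1) (caret_last d) = rcomb d 1 (caret_last d)"
proof -
  have "2 * d - 1 = 1 * (d - 1) + d" using d2 by simp
  then have "add_caret d (2 * d - 1) (caret_last d) = add_caret d (1 * (d - 1) + d) (rcomb d 1 (caret d))"
    by (simp only: caret_last_def)
  also have "\<dots> = rcomb d 1 (add_caret d d (caret d))"
    by (rule add_caret_rcomb) (use d2 in simp_all)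
  finally show ?thesis by (simp only: add_caret_caret_d)
qed

lemma add_caret_caret_last_d: "add_caret d d (caret_last d) = rcomb d 1 (caret_first d)"
proof -
  have "add_caret d (1 * (d - 1) + 1) (rcomb d 1 (caret d)) = rcomb d 1 (add_caret d 1 (caret d))"
    by (rule add_caret_rcomb) (use d2 in simp_all)
  moreover have "1 * (d - 1) + 1 = d" using d2 by simp
  ultimately show ?thesis by (simp only: caret_last_def add_caret_caret_1)
qed

lemma add_caret_caret_first_last: "add_caret d (2 * d - 1) (caret_first d) = caret_pair d (caret d)"
proof -
  have "add_caret d (2 * d - 2 + 1) (caret_pair d Lf) = caret_pair d (add_caret d 1 Lf)"
    by (rule add_caret_caret_pair) simp_all
  moreover have "2 * d - 2 + 1 = 2 * d - 1" using d2 by simp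
  ultimately show ?thesis by (simp add: caret_first_eq_caret_pair caret_def)
qed

lemma add_caret_caret_pair_caret: "add_caret d (3 * d - 2) (caret_pair d (caret d))
    = caret_pair d (caret_last d)"
proof -
  have "add_caret d (2 * d - 2 + d) (caret_pair d (caret d)) = caret_pair d (add_caret d d (caret d))"
    by (rule add_caret_caret_pair) (use d2 in simp_all)
  moreover have "2 * d - 2 + d = 3 * d - 2" using d2 by simp
  ultimately show ?thesis by (simp add: add_caret_caret_d)
qed

lemma add_caret_rcomb_caret_last: "add_caret d (3 * d - 2) (rcomb d 1 (caret_last d))
    = rcomb d 2 (caret_last d)"
proof -
  have "add_caret d (1 * (d - 1) + (2 * d - 1)) (rcomb d 1 (caret_last d)) =
      rcomb d 1 (add_caret d (2 * d - 1) (caret_last d))"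
    by (rule add_caret_rcomb) (use d2 in simp_all)
  moreover have "1 * (d - 1) + (2 * d - 1) = 3 * d - 2" using d2 by simp
  ultimately show ?thesis by (simp only: add_caret_caret_last_last rcomb_rcomb one_add_one)
qed

lemma leaf_depths_caret_last: "leaf_depths (caret_last d) = replicate (d - 1) 1 @ replicate d 2"
  by (simp add: caret_last_def caret_def map_replicate_const)

lemma leaf_depths_caret_first: "leaf_depths (caret_first d) = replicate d 2 @ replicate (d - 1) 1"
  by (simp add: caret_first_def caret_def map_replicate_const)

lemma neg_one_notin_depth_diffs_ab:
  "- 1 \<notin> depth_diffs (Nd (caret_last d # replicate (d - 1) Lf)) (rcomb d 1 (caret_last d))"
proof -
  have l1: "leaf_depths (Nd (caret_last d # replicate (d - 1) Lf)) =
      replicate (d - 1) 2 @ replicate (d - 1) 3 @ [3] @ replicate (d - 1) 1"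
    using d2 by (simp add: leaf_depths_caret_last map_replicate_const replicate_snoc[of d 3])
  have l2: "leaf_depths (rcomb d 1 (caret_last d)) =
      replicate (d - 1) 1 @ replicate (d - 1) 2 @ [3] @ replicate (d - 1) 3"
    using d2 by (simp add: leaf_depths_caret_last map_replicate_const replicate_Cons[of d 3])
  show ?thesis unfolding depth_diffs_def l1 l2
    using d2 by (simp add: pair_diffs_append pair_diffs_replicate pair_diffs_Cons)
qed

lemma neg_one_in_depth_diffs_ba:
  "- 1 \<in> depth_diffs (caret_pair d (caret_first d)) (rcomb d 2 (caret_last d))"
proof -
  have l1: "leaf_depths (caret_pair d (caret_first d)) =
      (replicate d 2 @ replicate (d - 2) 1 @ replicate (d - 1) 3) @ [3] @ replicate (d - 1) 2"
    using d2 by (simp add: caret_pair_def leaf_depths_caret_first caret_def map_replicate_const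
        replicate_snoc[of d 3])
  have l2: "leaf_depths (rcomb d 2 (caret_last d)) =
      (replicate (d - 1) 1 @ replicate (d - 1) 2 @ replicate (d - 1) 3) @ [4] @ replicate (d - 1) 4"
  proof -
    have "rcomb d 2 (caret_last d) = rcomb d (Suc (Suc 0)) (caret_last d)" by (simp add: numeral_2_eq_2)
    then show ?thesis
      using d2 by (simp add: leaf_depths_caret_last map_replicate_const replicate_Cons[of d 4])
  qed
  have "length (replicate d 2 @ replicate (d - 2) (1::nat) @ replicate (d - 1) 3) =
      length (replicate (d - 1) 1 @ replicate (d - 1) (2::nat) @ replicate (d - 1) 3)"
    using d2 by simp
  from pair_diffs_append[OF this] show ?thesis unfolding depth_diffs_def l1 l2
    by (simp add: pair_diffs_Cons)
qed

end

section \<open>Expansions in a cloning system\<close>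

lemma clone_perm_fixes_tail:
  assumes "\<forall>i. N \<le> i \<and> i \<le> M \<longrightarrow> \<sigma> i = i" "N \<le> k" "k \<le> M" "N \<le> i" "i \<le> M + d - 1" "1 \<le> d"
  shows "clone_perm d k \<sigma> i = i"
proof -
  have sk: "\<sigma> k = k" using assms by auto
  consider "i < k + d" | "k + d \<le> i" by arith
  then show ?thesis
  proof cases
    case 2
    then have "N \<le> i - (d - 1)" "i - (d - 1) \<le> M" using assms by auto
    then have "\<sigma> (i - (d - 1)) = i - (d - 1)" using assms(1) by blast
    then show ?thesis using sk 2 by (simp add: clone_perm_def Let_def)
  qed (use assms sk in \<open>auto simp: clone_perm_def Let_def\<close>)
qed

locale cloning_setting =
  fixes d :: nat and G :: "nat \<Rightarrow> 'g monoid" and \<rho> :: "nat \<Rightarrow> 'g \<Rightarrow> nat \<Rightarrow> nat"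
    and \<kappa> :: "nat \<Rightarrow> nat \<Rightarrow> 'g \<Rightarrow> 'g"
  assumes d2: "2 \<le> d"
    and cloning: "cloning_system d G \<rho> \<kappa>"
    and fully_compatible: "fully_compatible d G \<rho> \<kappa>"
    and slightly_pure: "slightly_pure G \<rho>"
    and uniform: "uniform d G \<kappa>"
begin

lemma cloning_group_hom: "\<forall>n\<ge>1. group (G n) \<and> \<rho> n \<in> hom (G n) (sym_group n)"
  using cloning unfolding cloning_system_def by (elim conjE)

lemma cloning_kappa_funcset: "\<forall>n\<ge>1. \<forall>k\<in>{1..n}. \<kappa> n k \<in> carrier (G n) \<rightarrow> carrier (G (n + d - 1))
    \<and> inj_on (\<kappa> n k) (carrier (G n))"
  using cloning unfolding cloning_system_def by (elim conjE)

lemma cloning_C1: "\<forall>n\<ge>1. \<forall>k\<in>{1..n}. \<forall>g\<in>carrier (G n). \<forall>h\<in>carrier (G n).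
    \<kappa> n k (g \<otimes>\<^bsub>G n\<^esub> h) = \<kappa> n (\<rho> n h k) g \<otimes>\<^bsub>G (n + d - 1)\<^esub> \<kappa> n k h"
  using cloning unfolding cloning_system_def by (elim conjE)

lemma cloning_C2: "\<forall>n\<ge>1. \<forall>k l. 1 \<le> k \<and> k < l \<and> l \<le> n \<longrightarrow> (\<forall>g\<in>carrier (G n).
    \<kappa> (n + d - 1) k (\<kappa> n l g) = \<kappa> (n + d - 1) (l + d - 1) (\<kappa> n k g))"
  using cloning unfolding cloning_system_def by (elim conjE)

lemma group_G: "1 \<le> n \<Longrightarrow> group (G n)"
  using cloning_group_hom by simp

lemma rho_hom: "1 \<le> n \<Longrightarrow> \<rho> n \<in> hom (G n) (sym_group n)"
  using cloning_group_hom by simp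

lemma rho_permutes: "1 \<le> n \<Longrightarrow> g \<in> carrier (G n) \<Longrightarrow> \<rho> n g permutes {1..n}"
  using hom_in_carrier[OF rho_hom] sym_group_carrier by blast

lemma rho_mult:
  "1 \<le> n \<Longrightarrow> g \<in> carrier (G n) \<Longrightarrow> h \<in> carrier (G n) \<Longrightarrow> \<rho> n (g \<otimes>\<^bsub>G n\<^esub> h) = \<rho> n g \<circ> \<rho> n h"
  using hom_mult[OF rho_hom] by (simp add: sym_group_mult)

lemma rho_one: "1 \<le> n \<Longrightarrow> \<rho> n \<one>\<^bsub>G n\<^esub> = id"
  using hom_one[OF rho_hom group_G sym_group_is_group] by (simp add: sym_group_one)

lemma kappa_closed:
  assumes "1 \<le> n" "k \<in> {1..n}" "g \<in> carrier (G n)"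
  shows "\<kappa> n k g \<in> carrier (G (n + d - 1))"
proof -
  have "\<kappa> n k \<in> carrier (G n) \<rightarrow> carrier (G (n + d - 1))" using cloning_kappa_funcset assms(1,2) by simp
  then show ?thesis using assms(3) by (rule funcset_mem)
qed

lemma kappa_mult:
  "1 \<le> n \<Longrightarrow> k \<in> {1..n} \<Longrightarrow> g \<in> carrier (G n) \<Longrightarrow> h \<in> carrier (G n) \<Longrightarrow>
    \<kappa> n k (g \<otimes>\<^bsub>G n\<^esub> h) = \<kappa> n (\<rho> n h k) g \<otimes>\<^bsub>G (n + d - 1)\<^esub> \<kappa> n k h"
  using cloning_C1 by simp

lemma kappa_kappa_commute:
  "1 \<le> k \<Longrightarrow> k < l \<Longrightarrow> l \<le> n \<Longrightarrow> g \<in> carrier (G n) \<Longrightarrow>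
    \<kappa> (n + d - 1) k (\<kappa> n l g) = \<kappa> (n + d - 1) (l + d - 1) (\<kappa> n k g)"
  using cloning_C2 by simp

lemma rho_kappa:
  "1 \<le> n \<Longrightarrow> k \<in> {1..n} \<Longrightarrow> g \<in> carrier (G n) \<Longrightarrow>
    \<rho> (n + d - 1) (\<kappa> n k g) i = clone_perm d k (\<rho> n g) i"
  using fully_compatible by (simp add: fully_compatible_def)

lemma rho_fixes_last: "1 \<le> n \<Longrightarrow> g \<in> carrier (G n) \<Longrightarrow> \<rho> n g n = n"
  using slightly_pure by (simp add: slightly_pure_def)

lemma kappa_kappa_uniform:
  "1 \<le> n \<Longrightarrow> k \<in> {1..n} \<Longrightarrow> k \<le> l \<Longrightarrow> l \<le> l' \<Longrightarrow> l' \<le> k + d - 1 \<Longrightarrow> g \<in> carrier (G n) \<Longrightarrow>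
    \<kappa> (n + d - 1) l (\<kappa> n k g) = \<kappa> (n + d - 1) l' (\<kappa> n k g)"
  using uniform by (simp add: uniform_def)

lemma kappa_one: "1 \<le> n \<Longrightarrow> k \<in> {1..n} \<Longrightarrow> \<kappa> n k \<one>\<^bsub>G n\<^esub> = \<one>\<^bsub>G (n + d - 1)\<^esub>"
proof -
  assume n: "1 \<le> n" and k: "k \<in> {1..n}"
  interpret G: group "G n" using group_G n .
  interpret G': group "G (n + d - 1)" using group_G n d2 by simp
  have c: "\<kappa> n k \<one>\<^bsub>G n\<^esub> \<in> carrier (G (n + d - 1))" using kappa_closed n k by simp
  have "\<kappa> n k \<one>\<^bsub>G n\<^esub> = \<kappa> n k (\<one>\<^bsub>G n\<^esub> \<otimes>\<^bsub>G n\<^esub> \<one>\<^bsub>G n\<^esub>)" by simp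
  also have "\<dots> = \<kappa> n (\<rho> n \<one>\<^bsub>G n\<^esub> k) \<one>\<^bsub>G n\<^esub> \<otimes>\<^bsub>G (n + d - 1)\<^esub> \<kappa> n k \<one>\<^bsub>G n\<^esub>"
    by (rule kappa_mult[OF n k]) simp_all
  also have "\<dots> = \<kappa> n k \<one>\<^bsub>G n\<^esub> \<otimes>\<^bsub>G (n + d - 1)\<^esub> \<kappa> n k \<one>\<^bsub>G n\<^esub>"
    using rho_one[OF n] by simp
  finally show ?thesis using G'.l_cancel_one'[OF c c] by simp
qed

abbreviation valid :: "'g triple \<Rightarrow> bool" where
  "valid \<equiv> valid_triple d G"

abbreviation expands :: "'g triple \<Rightarrow> 'g triple \<Rightarrow> bool" where
  "expands \<equiv> expansion d G \<rho> \<kappa>"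

definition expand :: "'g triple \<Rightarrow> nat \<Rightarrow> 'g triple" where
  "expand x k = (case x of (T, g, U) \<Rightarrow>
     (add_caret d (\<rho> (leaves U) g k) T, \<kappa> (leaves U) k g, add_caret d k U))"

definition right_tree :: "'g triple \<Rightarrow> dtree" where
  "right_tree x = snd (snd x)"

lemma expansion_iff: "expands x y \<longleftrightarrow> valid x \<and> (\<exists>k\<in>{1..leaves (right_tree x)}. y = expand x k)"
  by (cases x) (auto simp: expansion_def expand_def right_tree_def)

lemma valid_leaves_ge_1: "valid (T, g, U) \<Longrightarrow> 1 \<le> leaves U"
  using leaves_gt_0[of d U] d2 by (auto simp: valid_triple_def)

lemma dary_right_tree: "valid x \<Longrightarrow> dary d (right_tree x)"
  by (cases x) (auto simp: valid_triple_def right_tree_def)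

lemma right_tree_expand: "right_tree (expand x k) = add_caret d k (right_tree x)"
  by (cases x) (simp add: expand_def right_tree_def)

lemma valid_expand: "valid x \<Longrightarrow> k \<in> {1..leaves (right_tree x)} \<Longrightarrow> valid (expand x k)"
proof (cases x)
  case (fields T g U)
  assume v: "valid x" and k: "k \<in> {1..leaves (right_tree x)}"
  have n: "1 \<le> leaves U" using v fields valid_leaves_ge_1 by simp
  have vx: "dary d T" "dary d U" "leaves T = leaves U" "g \<in> carrier (G (leaves U))"
    using v fields by (auto simp: valid_triple_def)
  have "\<rho> (leaves U) g k \<in> {1..leaves T}"
    using permutes_in_image[OF rho_permutes[OF n vx(4)]] k fields vx(3) by (simp add: right_tree_def)
  then show ?thesis using vx k n fields kappa_closed[OF n _ vx(4), of k]
    by (auto simp: expand_def valid_triple_def right_tree_def leaves_add_caret dary_add_caret)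
qed

lemma expansion_expand: "valid x \<Longrightarrow> k \<in> {1..leaves (right_tree x)} \<Longrightarrow> expands x (expand x k)"
  by (auto simp: expansion_iff)

lemma valid_expansion: "expands x y \<Longrightarrow> valid y"
  by (auto simp: expansion_iff valid_expand)

lemma valid_expansions: "expands\<^sup>*\<^sup>* x y \<Longrightarrow> valid x \<Longrightarrow> valid y"
  by (induction rule: rtranclp_induct) (auto intro: valid_expansion)

lemma inner_nodes_right_tree_expansion:
  "expands x y \<Longrightarrow> inner_nodes (right_tree x) \<subset> inner_nodes (right_tree y)"
proof -
  assume "expands x y"
  then obtain k where k: "k \<in> {1..leaves (right_tree x)}" "y = expand x k" by (auto simp: expansion_iff)
  then have "k - 1 < length (leaf_addrs (right_tree x))" by (auto simp: length_leaf_addrs)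
  then have "leaf_addrs (right_tree x) ! (k - 1) \<notin> inner_nodes (right_tree x)"
    by (intro leaf_addr_notin_inner_nodes) simp
  then show ?thesis using k by (auto simp: right_tree_expand inner_nodes_add_caret)
qed

lemma inner_nodes_right_tree_expansions:
  "expands\<^sup>*\<^sup>* x y \<Longrightarrow> inner_nodes (right_tree x) \<subseteq> inner_nodes (right_tree y)"
  by (induction rule: rtranclp_induct) (auto dest: inner_nodes_right_tree_expansion)

text \<open>Carets at distinct leaves k < l of the right tree commute: by (C2) for the group element, and
  because \<open>\<rho>\<close> of a cloned element moves the other leaf as \<open>\<zeta>\<close> does.\<close>

lemma expand_expand_commute:
  assumes v: "valid x" and kl: "1 \<le> k" "k < l" "l \<le> leaves (right_tree x)"
  shows "expand (expand x k) (l + d - 1) = expand (expand x l) k"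
proof (cases x)
  case (fields T g U)
  let ?n = "leaves U" and ?s = "\<rho> (leaves U) g"
  have n: "1 \<le> ?n" using v fields valid_leaves_ge_1 by simp
  have vx: "dary d T" "dary d U" "leaves T = ?n" "g \<in> carrier (G ?n)"
    using v fields by (auto simp: valid_triple_def)
  have perm: "?s permutes {1..?n}" using rho_permutes[OF n vx(4)] .
  have kin: "k \<in> {1..?n}" "l \<in> {1..?n}" using kl fields by (auto simp: right_tree_def)
  then have sk: "?s k \<in> {1..?n}" "?s l \<in> {1..?n}" using permutes_in_image[OF perm] by auto
  have ne: "?s k \<noteq> ?s l" using permutes_inj[OF perm] kl by (metis injD less_irrefl)
  have "\<not> l + d - 1 < k" "\<not> l + d - 1 < k + d" "l + d - 1 - (d - 1) = l" using kl d2 by auto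
  then have r1: "\<rho> (?n + d - 1) (\<kappa> ?n k g) (l + d - 1) = (if ?s l < ?s k then ?s l else ?s l + (d - 1))"
    using rho_kappa[OF n kin(1) vx(4), where i = "l + d - 1"]
    by (simp only: clone_perm_def Let_def if_False)
  have r2: "\<rho> (?n + d - 1) (\<kappa> ?n l g) k = (if ?s k < ?s l then ?s k else ?s k + (d - 1))"
    using rho_kappa[OF n kin(2) vx(4), where i = k] kl by (simp add: clone_perm_def Let_def)
  have T: "add_caret d (if ?s l < ?s k then ?s l else ?s l + (d - 1)) (add_caret d (?s k) T) =
      add_caret d (if ?s k < ?s l then ?s k else ?s k + (d - 1)) (add_caret d (?s l) T)"
    using ne add_caret_commute[OF vx(1), of "?s k" "?s l"] add_caret_commute[OF vx(1), of "?s l" "?s k"]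
      sk vx(3) d2 by (cases "?s k < ?s l") auto
  have U: "add_caret d (l + d - 1) (add_caret d k U) = add_caret d k (add_caret d l U)"
    using add_caret_commute[OF vx(2), of k l] kl fields by (simp add: right_tree_def)
  have "\<kappa> (?n + d - 1) (l + d - 1) (\<kappa> ?n k g) = \<kappa> (?n + d - 1) k (\<kappa> ?n l g)"
    using kappa_kappa_commute[OF kl(1,2) _ vx(4)] kin by simp
  moreover have "leaves (add_caret d k U) = ?n + d - 1" "leaves (add_caret d l U) = ?n + d - 1"
    using kin by (auto simp: leaves_add_caret)
  ultimately show ?thesis using fields T U r1 r2 by (simp add: expand_def)
qed

lemma expansion_diamond_less:
  assumes v: "valid x" and kl: "1 \<le> k" "k < l" "l \<le> leaves (right_tree x)"
  defines "w \<equiv> expand (expand x l) k"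
  shows "expands (expand x k) w" "expands (expand x l) w"
    and "inner_nodes (right_tree w)
        = inner_nodes (right_tree (expand x k)) \<union> inner_nodes (right_tree (expand x l))"
proof -
  have k: "k \<in> {1..leaves (right_tree x)}" and l: "l \<in> {1..leaves (right_tree x)}" using kl by auto
  have "l + d - 1 \<in> {1..leaves (right_tree (expand x k))}" "k \<in> {1..leaves (right_tree (expand x l))}"
    using kl d2 by (auto simp: right_tree_expand leaves_add_caret)
  then show "expands (expand x k) w" "expands (expand x l) w"
    using expansion_expand valid_expand[OF v k] valid_expand[OF v l] expand_expand_commute[OF v kl]
    unfolding w_def by metis+
  show "inner_nodes (right_tree w)
      = inner_nodes (right_tree (expand x k)) \<union> inner_nodes (right_tree (expand x l))"
    using kl leaf_addrs_add_caret_nth_less[OF kl] unfolding w_def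
    by (auto simp: right_tree_expand inner_nodes_add_caret leaves_add_caret)
qed

lemma expansion_diamond:
  assumes "expands x y" "expands x z" "y \<noteq> z"
  obtains w where "expands y w" "expands z w"
    and "inner_nodes (right_tree w) = inner_nodes (right_tree y) \<union> inner_nodes (right_tree z)"
proof -
  obtain k l where v: "valid x" and k: "k \<in> {1..leaves (right_tree x)}" "y = expand x k"
    and l: "l \<in> {1..leaves (right_tree x)}" "z = expand x l"
    using assms(1,2) by (auto simp: expansion_iff)
  consider "k < l" | "l < k" using assms(3) k l by fastforce
  then show ?thesis
  proof cases
    case 1
    then show ?thesis using that expansion_diamond_less[OF v _ 1] k l by auto
  next
    case 2
    then show ?thesis using that expansion_diamond_less[OF v _ 2] k l by (auto simp: Un_commute)
  qed
qed

lemma equivclp_expansion_iff: "equivclp expands x y \<longleftrightarrow> (\<exists>w. expands\<^sup>*\<^sup>* x w \<and> expands\<^sup>*\<^sup>* y w)"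
proof -
  have "strong_confluentp expands"
  proof
    fix x y z assume "expands x y" "expands x z"
    show "\<exists>u. expands\<^sup>*\<^sup>* y u \<and> expands\<^sup>=\<^sup>= z u"
    proof (cases "y = z")
      case False
      then obtain w where "expands y w" "expands z w"
        using expansion_diamond[OF \<open>expands x y\<close> \<open>expands x z\<close>] by blast
      then show ?thesis by blast
    qed blast
  qed
  then have "equivclp expands = expands\<^sup>*\<^sup>* OO expands\<inverse>\<inverse>\<^sup>*\<^sup>*"
    by (intro semiconfluentp_equivclp strong_confluentp_into_semiconfluentp)
  then show ?thesis by (auto simp: rtranclp_conversep)
qed

lemma expansions_reach_tree:
  "valid w \<Longrightarrow> dary d V \<Longrightarrow> inner_nodes (right_tree w) \<subseteq> inner_nodes V \<Longrightarrow>
     \<exists>w'. expands\<^sup>*\<^sup>* w w' \<and> right_tree w' = V"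
proof (induction "card (inner_nodes V - inner_nodes (right_tree w))" arbitrary: w rule: less_induct)
  case less
  show ?case
  proof (cases "inner_nodes (right_tree w) = inner_nodes V")
    case True
    then show ?thesis using inner_nodes_inject[OF dary_right_tree[OF less(2)] less(3)] by blast
  next
    case False
    then obtain a where a: "a \<in> set (leaf_addrs (right_tree w))" "a \<in> inner_nodes V"
      using leaf_addr_in_inner_nodes_if_psubset[OF dary_right_tree[OF less(2)] less(3)] less(4) by blast
    then obtain i where i: "i < leaves (right_tree w)" "a = leaf_addrs (right_tree w) ! i"
      by (auto simp: in_set_conv_nth length_leaf_addrs)
    let ?w1 = "expand w (Suc i)"
    have e: "expands w ?w1" using expansion_expand[OF less(2)] i by simp
    have w1: "inner_nodes (right_tree ?w1) = insert a (inner_nodes (right_tree w))"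
      using i by (simp add: right_tree_expand inner_nodes_add_caret)
    have "card (inner_nodes V - inner_nodes (right_tree ?w1)) < card (inner_nodes V - inner_nodes (right_tree w))"
      using card_Diff_psubset_less[of "inner_nodes (right_tree w)" "inner_nodes (right_tree ?w1)"
          "inner_nodes V"]
        w1 leaf_addr_notin_inner_nodes[OF a(1)] a(2) less(4) finite_inner_nodes(1) by auto
    moreover have "inner_nodes (right_tree ?w1) \<subseteq> inner_nodes V" using w1 a(2) less(4) by auto
    ultimately obtain w' where "expands\<^sup>*\<^sup>* ?w1 w'" "right_tree w' = V"
      using less(1) less(3) valid_expansion[OF e] by blast
    then show ?thesis using e converse_rtranclp_into_rtranclp by metis
  qed
qed

lemma right_tree_expansions_neq:
  assumes "expands x x1" "expands\<^sup>*\<^sup>* x1 w"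
  shows "right_tree w \<noteq> right_tree x"
proof -
  have "inner_nodes (right_tree x) \<subset> inner_nodes (right_tree w)"
    using inner_nodes_right_tree_expansion[OF assms(1)] inner_nodes_right_tree_expansions[OF assms(2)]
      by blast
  then show ?thesis by auto
qed

lemma expansions_join_over_right_tree:
  assumes "valid x" "expands x x1" "expands x x2" "x1 \<noteq> x2"
    and "expands\<^sup>*\<^sup>* x1 y" "expands\<^sup>*\<^sup>* x2 z" "right_tree y = right_tree z"
  obtains w where "expands\<^sup>*\<^sup>* x1 w" "expands\<^sup>*\<^sup>* x2 w" "right_tree w = right_tree y"
proof -
  obtain w where w: "expands x1 w" "expands x2 w"
    "inner_nodes (right_tree w) = inner_nodes (right_tree x1) \<union> inner_nodes (right_tree x2)"
    using expansion_diamond[OF assms(2-4)] by blast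
  have "inner_nodes (right_tree w) \<subseteq> inner_nodes (right_tree y)"
    using w(3) inner_nodes_right_tree_expansions[OF assms(5)] inner_nodes_right_tree_expansions[OF assms(6)]
      assms(7) by auto
  moreover have "dary d (right_tree y)"
    using dary_right_tree valid_expansions[OF assms(5) valid_expansion[OF assms(2)]] by blast
  ultimately obtain w' where "expands\<^sup>*\<^sup>* w w'" "right_tree w' = right_tree y"
    using expansions_reach_tree[OF valid_expansion[OF w(1)]] by blast
  then show ?thesis using that w(1,2) by (meson converse_rtranclp_into_rtranclp)
qed

lemma expansions_unique:
  assumes "valid x" "expands\<^sup>*\<^sup>* x y" "expands\<^sup>*\<^sup>* x z" "right_tree y = right_tree z"
  shows "y = z"
  using assms
proof (induction "card (inner_nodes (right_tree y) - inner_nodes (right_tree x))" arbitrary: x z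
    rule: less_induct)
  case less
  let ?V = "inner_nodes (right_tree y)"
  have IH: "y = z'" if "expands x x1" "expands\<^sup>*\<^sup>* x1 y" "expands\<^sup>*\<^sup>* x1 z'" "right_tree y = right_tree z'"
    for x1 z'
  proof (rule less.hyps[OF _ valid_expansion[OF that(1)] that(2-4)])
    show "card (?V - inner_nodes (right_tree x1)) < card (?V - inner_nodes (right_tree x))"
      by (rule card_Diff_psubset_less[OF inner_nodes_right_tree_expansion[OF that(1)]
            inner_nodes_right_tree_expansions[OF that(2)] finite_inner_nodes(1)])
  qed
  show ?case
  proof (cases rule: converse_rtranclpE[OF less.prems(2)])
    case 1
    then show ?thesis
      using right_tree_expansions_neq less.prems(3,4) by (metis converse_rtranclpE)
  next
    case (2 x1)
    show ?thesis
    proof (cases rule: converse_rtranclpE[OF less.prems(3)])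
      case 1
      then show ?thesis using right_tree_expansions_neq[OF 2] less.prems(4) by simp
    next
      case (2 x2)
      show ?thesis
      proof (cases "x1 = x2")
        case True
        then show ?thesis using IH \<open>expands x x1\<close> \<open>expands\<^sup>*\<^sup>* x1 y\<close> 2 less.prems(4) by blast
      next
        case False
        then obtain w where "expands\<^sup>*\<^sup>* x1 w" "expands\<^sup>*\<^sup>* x2 w" "right_tree w = right_tree y"
          using expansions_join_over_right_tree less.prems(1,4) \<open>expands x x1\<close> \<open>expands\<^sup>*\<^sup>* x1 y\<close> 2
          by metis
        then show ?thesis using IH \<open>expands x x1\<close> \<open>expands\<^sup>*\<^sup>* x1 y\<close> IH[OF 2(1) _ 2(2)] less.prems(4)
          by metis
      qed
    qed
  qed
qed

section \<open>Multiplication of classes\<close>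

definition mult_triple :: "'g triple \<Rightarrow> 'g triple \<Rightarrow> 'g triple" where
  "mult_triple x y = (fst x, fst (snd x) \<otimes>\<^bsub>G (leaves (right_tree x))\<^esub> fst (snd y), snd (snd y))"

text \<open>(C1) is what makes expansion compatible with multiplication.\<close>

lemma expand_mult_triple:
  assumes vx: "valid (T, g, U)" and vy: "valid (U, h, W)" and k: "k \<in> {1..leaves U}"
  shows "\<rho> (leaves U) h k \<in> {1..leaves U}"
    and "right_tree (expand (T, g, U) (\<rho> (leaves U) h k)) = fst (expand (U, h, W) k)"
    and "valid (mult_triple (T, g, U) (U, h, W))"
    and "expand (mult_triple (T, g, U) (U, h, W)) k =
           mult_triple (expand (T, g, U) (\<rho> (leaves U) h k)) (expand (U, h, W) k)"
proof -
  let ?n = "leaves U"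
  have n: "1 \<le> ?n" using valid_leaves_ge_1[OF vx] .
  have cx: "dary d T" "dary d U" "leaves T = ?n" "g \<in> carrier (G ?n)"
    using vx by (auto simp: valid_triple_def)
  have cy: "dary d W" "leaves W = ?n" "h \<in> carrier (G ?n)" using vy by (auto simp: valid_triple_def)
  interpret G: group "G ?n" using group_G[OF n] .
  show kk: "\<rho> ?n h k \<in> {1..?n}" using permutes_in_image[OF rho_permutes[OF n cy(3)]] k by simp
  show "right_tree (expand (T, g, U) (\<rho> ?n h k)) = fst (expand (U, h, W) k)"
    using cy(2) by (simp add: expand_def right_tree_def)
  show "valid (mult_triple (T, g, U) (U, h, W))"
    using cx cy by (simp add: mult_triple_def right_tree_def valid_triple_def)
  have "leaves (add_caret d (\<rho> ?n h k) U) = ?n + d - 1" using kk by (simp add: leaves_add_caret)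
  moreover have "\<rho> ?n (g \<otimes>\<^bsub>G ?n\<^esub> h) k = \<rho> ?n g (\<rho> ?n h k)" using rho_mult[OF n cx(4) cy(3)] by simp
  ultimately show "expand (mult_triple (T, g, U) (U, h, W)) k =
      mult_triple (expand (T, g, U) (\<rho> ?n h k)) (expand (U, h, W) k)"
    using kappa_mult[OF n k cx(4) cy(3)] cy(2) by (simp add: expand_def mult_triple_def right_tree_def)
qed

lemma expansion_mult_triple:
  assumes vx: "valid (T, g, U)" and vy: "valid (U, h, W)" and k: "k \<in> {1..leaves U}"
  shows "expands (mult_triple (T, g, U) (U, h, W))
           (mult_triple (expand (T, g, U) (\<rho> (leaves U) h k)) (expand (U, h, W) k))"
proof -
  have "k \<in> {1..leaves (right_tree (mult_triple (T, g, U) (U, h, W)))}"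
    using k vy by (simp add: mult_triple_def right_tree_def valid_triple_def)
  from expansion_expand[OF expand_mult_triple(3)[OF vx vy k] this] show ?thesis
    unfolding expand_mult_triple(4)[OF vx vy k] .
qed

lemma expansion_mult_triple_left:
  assumes e: "expands x x'" and vy: "valid y" and m: "right_tree x = fst y"
  shows "\<exists>y'. expands y y' \<and> right_tree x' = fst y' \<and> expands (mult_triple x y) (mult_triple x' y')"
proof -
  obtain T g U where x: "x = (T, g, U)" by (cases x)
  obtain h W where y: "y = (U, h, W)" using m x by (cases y) (auto simp: right_tree_def)
  have vx: "valid x" using e by (simp add: expansion_iff)
  obtain k where k: "k \<in> {1..leaves U}" "x' = expand x k"
    using e x by (auto simp: expansion_iff right_tree_def)
  have "1 \<le> leaves U" "h \<in> carrier (G (leaves U))" using k vy y by (auto simp: valid_triple_def)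
  then have "k \<in> \<rho> (leaves U) h ` {1..leaves U}" using permutes_image[OF rho_permutes] k by simp
  then obtain k' where k': "k' \<in> {1..leaves U}" "k = \<rho> (leaves U) h k'" by blast
  have "expands y (expand y k')"
    using expansion_expand[OF vy] k'(1) vy y by (simp add: right_tree_def valid_triple_def)
  moreover have "right_tree x' = fst (expand y k')"
    using expand_mult_triple(2)[OF vx[unfolded x] vy[unfolded y] k'(1)] k k' x y by simp
  moreover have "expands (mult_triple x y) (mult_triple x' (expand y k'))"
    using expansion_mult_triple[OF vx[unfolded x] vy[unfolded y] k'(1)] k k' x y by simp
  ultimately show ?thesis by blast
qed

lemma expansion_mult_triple_right:
  assumes e: "expands y y'" and vx: "valid x" and m: "right_tree x = fst y"
  shows "\<exists>x'. expands x x' \<and> right_tree x' = fst y' \<and> expands (mult_triple x y) (mult_triple x' y')"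
proof -
  obtain T g U where x: "x = (T, g, U)" by (cases x)
  obtain h W where y: "y = (U, h, W)" using m x by (cases y) (auto simp: right_tree_def)
  have vy: "valid y" using e by (simp add: expansion_iff)
  have "leaves W = leaves U" using vy y by (simp add: valid_triple_def)
  then obtain k where k: "k \<in> {1..leaves U}" "y' = expand y k"
    using e y by (auto simp: expansion_iff right_tree_def)
  let ?x' = "expand x (\<rho> (leaves U) h k)"
  have "expands x ?x'"
    using expansion_expand[OF vx] expand_mult_triple(1)[OF vx[unfolded x] vy[unfolded y] k(1)] x
    by (simp add: right_tree_def)
  moreover have "right_tree ?x' = fst y'"
    using expand_mult_triple(2)[OF vx[unfolded x] vy[unfolded y] k(1)] k x y by simp
  moreover have "expands (mult_triple x y) (mult_triple ?x' y')"
    using expansion_mult_triple[OF vx[unfolded x] vy[unfolded y] k(1)] k x y by simp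
  ultimately show ?thesis by blast
qed

lemma expansions_mult_triple_left:
  assumes "expands\<^sup>*\<^sup>* x x'" "valid x" "valid y" "right_tree x = fst y"
  shows "\<exists>y'. expands\<^sup>*\<^sup>* y y' \<and> right_tree x' = fst y' \<and> expands\<^sup>*\<^sup>* (mult_triple x y) (mult_triple x' y')"
  using assms(1)
proof (induction rule: rtranclp_induct)
  case (step x1 x2)
  then obtain y1 where y1: "expands\<^sup>*\<^sup>* y y1" "right_tree x1 = fst y1"
    "expands\<^sup>*\<^sup>* (mult_triple x y) (mult_triple x1 y1)" by blast
  obtain y2 where "expands y1 y2" "right_tree x2 = fst y2" "expands (mult_triple x1 y1) (mult_triple x2 y2)"
    using expansion_mult_triple_left[OF step(2) valid_expansions[OF y1(1) assms(3)] y1(2)] by blast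
  then show ?case using y1 by (meson rtranclp.rtrancl_into_rtrancl)
qed (use assms in blast)

lemma expansions_mult_triple_right:
  assumes "expands\<^sup>*\<^sup>* y y'" "valid x" "valid y" "right_tree x = fst y"
  shows "\<exists>x'. expands\<^sup>*\<^sup>* x x' \<and> right_tree x' = fst y' \<and> expands\<^sup>*\<^sup>* (mult_triple x y) (mult_triple x' y')"
  using assms(1)
proof (induction rule: rtranclp_induct)
  case (step y1 y2)
  then obtain x1 where x1: "expands\<^sup>*\<^sup>* x x1" "right_tree x1 = fst y1"
    "expands\<^sup>*\<^sup>* (mult_triple x y) (mult_triple x1 y1)" by blast
  obtain x2 where "expands x1 x2" "right_tree x2 = fst y2" "expands (mult_triple x1 y1) (mult_triple x2 y2)"
    using expansion_mult_triple_right[OF step(2) valid_expansions[OF x1(1) assms(2)] x1(2)] by blast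
  then show ?case using x1 by (meson rtranclp.rtrancl_into_rtrancl)
qed (use assms in blast)

lemma valid_equivclp: "equivclp expands x y \<Longrightarrow> valid x \<Longrightarrow> valid y"
proof (induction rule: equivclp_induct)
  case (step y z)
  then show ?case by (auto simp: expansion_iff valid_expand)
qed

text \<open>Both pairs are first brought over a common middle tree, then over a common right tree;
  the two resulting representatives agree by \<open>expansions_unique\<close>.\<close>

lemma equivclp_mult_triple:
  assumes v: "valid x1" "valid y1" "right_tree x1 = fst y1"
    and x12: "equivclp expands x1 x2" and y12: "equivclp expands y1 y2" and m2: "right_tree x2 = fst y2"
  shows "equivclp expands (mult_triple x1 y1) (mult_triple x2 y2)"
proof -
  have v2: "valid x2" "valid y2" using valid_equivclp x12 y12 v by auto
  obtain x3 where x3: "expands\<^sup>*\<^sup>* x1 x3" "expands\<^sup>*\<^sup>* x2 x3" using x12 equivclp_expansion_iff by blast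
  obtain y1' where y1': "expands\<^sup>*\<^sup>* y1 y1'" "right_tree x3 = fst y1'"
    "expands\<^sup>*\<^sup>* (mult_triple x1 y1) (mult_triple x3 y1')"
    using expansions_mult_triple_left[OF x3(1) v] by blast
  obtain y2' where y2': "expands\<^sup>*\<^sup>* y2 y2'" "right_tree x3 = fst y2'"
    "expands\<^sup>*\<^sup>* (mult_triple x2 y2) (mult_triple x3 y2')"
    using expansions_mult_triple_left[OF x3(2) v2 m2] by blast
  have "equivclp expands y1' y1" using y1'(1) by (rule converse_rtranclp_into_equivclp)
  also note y12
  also have "equivclp expands y2 y2'" using y2'(1) by (rule rtranclp_into_equivclp)
  finally have "equivclp expands y1' y2'" .
  then obtain y3 where y3: "expands\<^sup>*\<^sup>* y1' y3" "expands\<^sup>*\<^sup>* y2' y3" using equivclp_expansion_iff by blast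
  have vx3: "valid x3" using valid_expansions[OF x3(1) v(1)] .
  have vy': "valid y1'" "valid y2'" using valid_expansions y1'(1) y2'(1) v(2) v2(2) by auto
  obtain x4 where x4: "expands\<^sup>*\<^sup>* x3 x4" "right_tree x4 = fst y3"
    "expands\<^sup>*\<^sup>* (mult_triple x3 y1') (mult_triple x4 y3)"
    using expansions_mult_triple_right[OF y3(1) vx3 vy'(1) y1'(2)] by blast
  obtain x5 where x5: "expands\<^sup>*\<^sup>* x3 x5" "right_tree x5 = fst y3"
    "expands\<^sup>*\<^sup>* (mult_triple x3 y2') (mult_triple x5 y3)"
    using expansions_mult_triple_right[OF y3(2) vx3 vy'(2) y2'(2)] by blast
  have "x4 = x5" using expansions_unique[OF vx3 x4(1) x5(1)] x4(2) x5(2) by simp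
  have "equivclp expands (mult_triple x1 y1) (mult_triple x3 y1')"
    using y1'(3) by (rule rtranclp_into_equivclp)
  also have "equivclp expands \<dots> (mult_triple x4 y3)" using x4(3) by (rule rtranclp_into_equivclp)
  also have "equivclp expands \<dots> (mult_triple x3 y2')"
    using x5(3) \<open>x4 = x5\<close> by (simp add: converse_rtranclp_into_equivclp)
  also have "equivclp expands \<dots> (mult_triple x2 y2)" using y2'(3) by (rule converse_rtranclp_into_equivclp)
  finally show ?thesis .
qed

abbreviation cls :: "'g triple \<Rightarrow> 'g triple set" where
  "cls \<equiv> tclass d G \<rho> \<kappa>"

abbreviation tmul :: "'g triple set \<Rightarrow> 'g triple set \<Rightarrow> 'g triple set" where
  "tmul \<equiv> Td_mult d G \<rho> \<kappa>"

lemma cls_eq_iff: "cls x = cls y \<longleftrightarrow> equivclp expands x y"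
proof
  assume "cls x = cls y"
  then have "y \<in> cls x" by (simp add: tclass_def)
  then show "equivclp expands x y" by (simp add: tclass_def)
next
  assume "equivclp expands x y"
  then show "cls x = cls y" unfolding tclass_def by (blast intro: equivclp_trans equivclp_sym)
qed

lemma Td_mult_cls:
  assumes v: "valid x" "valid y" and m: "right_tree x = fst y"
  shows "tmul (cls x) (cls y) = cls (mult_triple x y)"
proof (intro equalityI subsetI)
  fix z assume "z \<in> tmul (cls x) (cls y)"
  then obtain T g U h W where a: "(T, g, U) \<in> cls x" "(U, h, W) \<in> cls y"
    "z \<in> cls (T, g \<otimes>\<^bsub>G (leaves U)\<^esub> h, W)"
    unfolding Td_mult_def by blast
  have "equivclp expands (mult_triple x y) (mult_triple (T, g, U) (U, h, W))"
    using equivclp_mult_triple[OF v m] a(1,2) by (simp add: tclass_def right_tree_def)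
  moreover have "equivclp expands (mult_triple (T, g, U) (U, h, W)) z"
    using a(3) by (simp add: tclass_def mult_triple_def right_tree_def)
  ultimately show "z \<in> cls (mult_triple x y)" unfolding tclass_def by (blast intro: equivclp_trans)
next
  fix z assume z: "z \<in> cls (mult_triple x y)"
  obtain T g U where x: "x = (T, g, U)" by (cases x)
  obtain h W where y: "y = (U, h, W)" using m x by (cases y) (auto simp: right_tree_def)
  have "(T, g, U) \<in> cls x" "(U, h, W) \<in> cls y" using x y by (auto simp: tclass_def)
  moreover have "z \<in> cls (T, g \<otimes>\<^bsub>G (leaves U)\<^esub> h, W)"
    using z x y by (simp add: mult_triple_def right_tree_def)
  ultimately show "z \<in> tmul (cls x) (cls y)" unfolding Td_mult_def by blast
qed

section \<open>Classes with trivial group element\<close>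

definition id_triple :: "dtree \<Rightarrow> dtree \<Rightarrow> 'g triple" where
  "id_triple A B = (A, \<one>\<^bsub>G (leaves B)\<^esub>, B)"

lemma valid_id_triple: "dary d A \<Longrightarrow> dary d B \<Longrightarrow> leaves A = leaves B \<Longrightarrow> valid (id_triple A B)"
proof -
  assume a: "dary d A" "dary d B" "leaves A = leaves B"
  have "1 \<le> leaves B" using leaves_gt_0[OF _ a(2)] d2 by simp
  then interpret group "G (leaves B)" by (rule group_G)
  show ?thesis using a by (simp add: id_triple_def valid_triple_def)
qed

lemma expand_id_triple:
  assumes "k \<in> {1..leaves B}"
  shows "expand (id_triple A B) k = id_triple (add_caret d k A) (add_caret d k B)"
proof -
  have n: "1 \<le> leaves B" using assms by simp
  have "\<kappa> (leaves B) k \<one>\<^bsub>G (leaves B)\<^esub> = \<one>\<^bsub>G (leaves (add_caret d k B))\<^esub>"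
    using kappa_one[OF n assms] assms by (simp add: leaves_add_caret)
  then show ?thesis using rho_one[OF n] by (simp add: expand_def id_triple_def)
qed

lemma cls_id_triple_add_caret:
  assumes "valid (id_triple A B)" "k \<in> {1..leaves B}"
  shows "cls (id_triple A B) = cls (id_triple (add_caret d k A) (add_caret d k B))"
proof -
  have "expands (id_triple A B) (expand (id_triple A B) k)"
    using expansion_expand[OF assms(1)] assms(2) by (simp add: right_tree_def id_triple_def)
  then show ?thesis unfolding cls_eq_iff expand_id_triple[OF assms(2)] by (rule r_into_equivclp)
qed

lemma Td_mult_id_triple:
  assumes "valid (id_triple A B)" "valid (id_triple B C)"
  shows "tmul (cls (id_triple A B)) (cls (id_triple B C)) = cls (id_triple A C)"
proof -
  have "1 \<le> leaves C" "leaves B = leaves C" using assms(2) valid_leaves_ge_1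
    by (auto simp: id_triple_def valid_triple_def)
  then interpret group "G (leaves C)" by (intro group_G) simp
  show ?thesis using assms Td_mult_cls
    by (simp add: id_triple_def right_tree_def mult_triple_def \<open>leaves B = leaves C\<close>)
qed

lemma expansions_id_triple:
  "expands\<^sup>*\<^sup>* (id_triple A B) z \<Longrightarrow> \<exists>A' B'. z = id_triple A' B' \<and> depth_diffs A' B' = depth_diffs A B"
proof (induction rule: rtranclp_induct)
  case (step y z)
  then obtain A' B' where y: "y = id_triple A' B'" "depth_diffs A' B' = depth_diffs A B" by blast
  obtain k where k: "valid y" "k \<in> {1..leaves B'}" "z = expand y k"
    using step(2) y by (auto simp: expansion_iff right_tree_def id_triple_def)
  have "leaves A' = leaves B'" using k(1) y by (simp add: id_triple_def valid_triple_def)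
  then have "depth_diffs (add_caret d k A') (add_caret d k B') = depth_diffs A B"
    using depth_diffs_add_caret[of d A' B' k] k(2) y(2) d2 by simp
  then show ?case using expand_id_triple[OF k(2)] k(3) y(1) by blast
qed blast

lemma depth_diffs_eq_if_cls_id_triple_eq:
  assumes "cls (id_triple A B) = cls (id_triple A' B')"
  shows "depth_diffs A B = depth_diffs A' B'"
proof -
  obtain w where w: "expands\<^sup>*\<^sup>* (id_triple A B) w" "expands\<^sup>*\<^sup>* (id_triple A' B') w"
    using assms by (auto simp: cls_eq_iff equivclp_expansion_iff)
  obtain A1 B1 where 1: "w = id_triple A1 B1" "depth_diffs A1 B1 = depth_diffs A B"
    using expansions_id_triple[OF w(1)] by blast
  obtain A2 B2 where 2: "w = id_triple A2 B2" "depth_diffs A2 B2 = depth_diffs A' B'"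
    using expansions_id_triple[OF w(2)] by blast
  show ?thesis using 1 2 by (simp add: id_triple_def)
qed

section \<open>The two sequences and their non-commutation\<close>

definition spine_class :: "nat \<Rightarrow> dtree \<Rightarrow> dtree \<Rightarrow> 'g triple set" where
  "spine_class n P Q = cls (id_triple (spine_tree d n P) (spine_tree d n Q))"

lemma valid_spine_id_triple:
  "dary d P \<Longrightarrow> dary d Q \<Longrightarrow> leaves P = leaves Q \<Longrightarrow> valid (id_triple (spine_tree d n P) (spine_tree d n Q))"
  using d2 by (intro valid_id_triple dary_spine_tree) (auto simp: leaves_spine_tree)

lemma spine_class_add_caret:
  assumes "dary d P" "dary d Q" "leaves P = leaves Q" "1 \<le> k" "k \<le> leaves Q"
  shows "spine_class n P Q = spine_class n (add_caret d k P) (add_caret d k Q)"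
proof -
  have "n * (d - 1) + k \<in> {1..leaves (spine_tree d n Q)}" using assms by (simp add: leaves_spine_tree)
  from cls_id_triple_add_caret[OF valid_spine_id_triple[OF assms(1-3)] this] show ?thesis
    unfolding spine_class_def
      using assms(3-5) add_caret_spine_tree[of k P] add_caret_spine_tree[of k Q] by simp
qed

lemma Td_mult_spine_class:
  assumes "dary d P" "dary d Q" "dary d R" "leaves P = leaves Q" "leaves Q = leaves R"
  shows "tmul (spine_class n P Q) (spine_class n Q R) = spine_class n P R"
  unfolding spine_class_def using assms by (intro Td_mult_id_triple valid_spine_id_triple) simp_all

lemma spine_class_in_Dd:
  assumes "dary d P" "dary d Q" "leaves P = leaves Q"
  shows "spine_class n P Q \<in> Dd_carrier d G \<rho> \<kappa>"
proof -
  have "delta_r (spine_tree d n P) = delta_r (spine_tree d n Q)" using delta_r_spine_tree[OF d2] by simp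
  then show ?thesis
    using valid_spine_id_triple[OF assms] unfolding Dd_carrier_def spine_class_def id_triple_def by blast
qed

definition seq_a :: "nat \<Rightarrow> 'g triple set" where
  "seq_a n = spine_class n (caret_first d) (caret_last d)"

definition seq_b :: "nat \<Rightarrow> 'g triple set" where
  "seq_b n = spine_class n (rcomb d 1 (caret_first d)) (rcomb d 1 (caret_last d))"

lemmas dary_trees = dary_caret[OF d2] dary_caret_first[OF d2] dary_caret_last[OF d2]
  dary_rcomb[of d, OF _ dary_caret_first[OF d2]] dary_rcomb[of d, OF _ dary_caret_last[OF d2]]
  dary_caret_pair[OF d2 dary_caret[OF d2]] dary_caret_pair[OF d2 dary_caret_first[OF d2]]
  dary_caret_pair[OF d2 dary_caret_last[OF d2]]

lemma Td_mult_seq_a_seq_b: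
  "tmul (seq_a n) (seq_b n)
      = spine_class n (Nd (caret_last d # replicate (d - 1) Lf)) (rcomb d 1 (caret_last d))"
proof -
  have "seq_a n = spine_class n (add_caret d d (caret_first d)) (add_caret d d (caret_last d))"
    unfolding seq_a_def using d2 by (intro spine_class_add_caret) (simp_all add: dary_trees)
  then have "seq_a n = spine_class n (Nd (caret_last d # replicate (d - 1) Lf)) (rcomb d 1 (caret_first d))"
    by (simp only: add_caret_caret_first_d[OF d2] add_caret_caret_last_d[OF d2])
  then show ?thesis unfolding seq_b_def using d2
    by (simp del: rcomb.simps add: Td_mult_spine_class dary_trees leaves_rcomb)
qed

lemma Td_mult_seq_b_seq_a:
  "tmul (seq_b n) (seq_a n) = spine_class n (caret_pair d (caret_first d)) (rcomb d 2 (caret_last d))"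
proof -
  have "seq_b n
      = spine_class n (add_caret d 1 (rcomb d 1 (caret_first d))) (add_caret d 1 (rcomb d 1 (caret_last d)))"
    unfolding seq_b_def using d2
    by (intro spine_class_add_caret) (simp_all del: rcomb.simps add: dary_trees leaves_rcomb)
  then have b: "seq_b n = spine_class n (caret_pair d (caret_first d)) (caret_pair d (caret_last d))"
    by (simp only: add_caret_rcomb_1[OF d2])
  have "seq_a n
      = spine_class n (add_caret d (2 * d - 1) (caret_first d)) (add_caret d (2 * d - 1) (caret_last d))"
    unfolding seq_a_def using d2 by (intro spine_class_add_caret) (simp_all add: dary_trees)
  also have "\<dots> = spine_class n (caret_pair d (caret d)) (rcomb d 1 (caret_last d))"
    by (simp only: add_caret_caret_first_last[OF d2] add_caret_caret_last_last[OF d2])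
  also have "\<dots> = spine_class n (add_caret d (3 * d - 2) (caret_pair d (caret d)))
      (add_caret d (3 * d - 2) (rcomb d 1 (caret_last d)))"
    using d2 by (intro spine_class_add_caret) (simp_all del: rcomb.simps add: dary_trees leaves_rcomb caret_pair_def)
  also have "\<dots> = spine_class n (caret_pair d (caret_last d)) (rcomb d 2 (caret_last d))"
    by (simp only: add_caret_caret_pair_caret[OF d2] add_caret_rcomb_caret_last[OF d2])
  finally show ?thesis unfolding b using d2
    by (simp del: rcomb.simps add: Td_mult_spine_class dary_trees leaves_rcomb caret_pair_def)
qed

text \<open>The two products are told apart by the depth difference -1.\<close>

lemma seq_a_seq_b_not_commute: "tmul (seq_a n) (seq_b n) \<noteq> tmul (seq_b n) (seq_a n)"
proof
  let ?A = "Nd (caret_last d # replicate (d - 1) Lf)" and ?B = "rcomb d 1 (caret_last d)"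
    and ?A' = "caret_pair d (caret_first d)" and ?B' = "rcomb d 2 (caret_last d)"
  have "leaves ?A = leaves ?B" "leaves ?A' = leaves ?B'"
    using d2 by (simp_all del: rcomb.simps add: leaves_rcomb caret_pair_def)
  note spine = depth_diffs_spine_tree[OF d2 this(1)] depth_diffs_spine_tree[OF d2 this(2)]
  assume "tmul (seq_a n) (seq_b n) = tmul (seq_b n) (seq_a n)"
  then have "depth_diffs (spine_tree d n ?A) (spine_tree d n ?B)
      = depth_diffs (spine_tree d n ?A') (spine_tree d n ?B')"
    unfolding Td_mult_seq_a_seq_b Td_mult_seq_b_seq_a spine_class_def
    by (rule depth_diffs_eq_if_cls_id_triple_eq)
  then have "insert 0 (depth_diffs ?A ?B) = insert 0 (depth_diffs ?A' ?B')" unfolding spine .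
  moreover have "- 1 \<notin> insert 0 (depth_diffs ?A ?B)" using neg_one_notin_depth_diffs_ab[OF d2] by simp
  moreover have "- 1 \<in> insert 0 (depth_diffs ?A' ?B')" using neg_one_in_depth_diffs_ba[OF d2] by simp
  ultimately show False by simp
qed

section \<open>Commutation with classes deep on the right spine\<close>

definition fixes_from :: "nat \<Rightarrow> 'g triple \<Rightarrow> bool" where
  "fixes_from N x \<longleftrightarrow>
     (\<forall>i. N \<le> i \<and> i \<le> leaves (right_tree x) \<longrightarrow> \<rho> (leaves (right_tree x)) (fst (snd x)) i = i)"

text \<open>Slight purity makes g fix the rightmost leaf, and full compatibility keeps all leaves grafted
  below it fixed under further carets there.\<close>

definition tail_expansion :: "'g triple \<Rightarrow> dtree \<Rightarrow> 'g \<Rightarrow> bool" where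
  "tail_expansion x S g' \<longleftrightarrow> (case x of (T, g, U) \<Rightarrow>
     expands\<^sup>*\<^sup>* (T, g, U) (graft_last T S, g', graft_last U S) \<and>
     valid (graft_last T S, g', graft_last U S) \<and> fixes_from (leaves U) (graft_last T S, g', graft_last U S))"

lemma expansion_graft_last_fixing:
  assumes vT: "dary d T" "dary d U" "leaves T = leaves U" and dS: "dary d S"
    and v: "valid (graft_last T S, g', graft_last U S)" and f: "fixes_from (leaves U) (graft_last T S, g', graft_last U S)"
    and j: "1 \<le> j" "j \<le> leaves S"
  defines "M \<equiv> leaves (graft_last U S)" and "k \<equiv> leaves U - 1 + j"
  shows "expands (graft_last T S, g', graft_last U S)
           (graft_last T (add_caret d j S), \<kappa> M k g', graft_last U (add_caret d j S))"
    and "fixes_from (leaves U) (graft_last T (add_caret d j S), \<kappa> M k g', graft_last U (add_caret d j S))"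
proof -
  let ?N = "leaves U"
  have d0: "0 < d" using d2 by simp
  have N: "1 \<le> ?N" using leaves_gt_0[OF d0 vT(2)] by simp
  have M: "M + 1 = ?N + leaves S" using dary_graft_last(2)[OF d0 vT(2) dS] by (simp add: M_def)
  have k: "k \<in> {1..M}" using N M j by (auto simp: k_def)
  have gc: "g' \<in> carrier (G M)" using v by (simp add: valid_triple_def M_def)
  have fix0: "\<forall>i. ?N \<le> i \<and> i \<le> M \<longrightarrow> \<rho> M g' i = i" using f by (simp add: fixes_from_def right_tree_def M_def)
  then have "\<rho> M g' k = k" using k j by (auto simp: k_def)
  then have e: "expand (graft_last T S, g', graft_last U S) k =
      (graft_last T (add_caret d j S), \<kappa> M k g', graft_last U (add_caret d j S))"
    using add_caret_graft_last_right[OF d0 vT(1) dS j] add_caret_graft_last_right[OF d0 vT(2) dS j] vT(3)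
    by (simp add: expand_def M_def k_def)
  have "expands (graft_last T S, g', graft_last U S) (expand (graft_last T S, g', graft_last U S) k)"
    by (rule expansion_expand[OF v]) (use k in \<open>simp add: right_tree_def M_def\<close>)
  with e show "expands (graft_last T S, g', graft_last U S)
      (graft_last T (add_caret d j S), \<kappa> M k g', graft_last U (add_caret d j S))" by simp
  have "leaves (graft_last U (add_caret d j S)) + 1 = ?N + leaves (add_caret d j S)"
    using dary_graft_last(2)[OF d0 vT(2) dary_add_caret(1)[OF dS]] .
  then have M': "leaves (graft_last U (add_caret d j S)) = M + d - 1"
    using j M N d2 by (simp add: leaves_add_caret)
  have "\<rho> (M + d - 1) (\<kappa> M k g') i = i" if "?N \<le> i" "i \<le> M + d - 1" for i
    using rho_kappa[OF _ k gc] clone_perm_fixes_tail[OF fix0, where k = k and i = i and d = d] k that d2 N j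
    by (auto simp: k_def)
  then show "fixes_from ?N (graft_last T (add_caret d j S), \<kappa> M k g', graft_last U (add_caret d j S))"
    unfolding fixes_from_def right_tree_def using M' by simp
qed

lemma tail_expansion_add_caret:
  assumes v: "valid (T, g, U)" and r: "tail_expansion (T, g, U) S g'" and dS: "dary d S"
    and p: "1 \<le> p" "p \<le> leaves S"
  shows "tail_expansion (T, g, U) (add_caret d p S) (\<kappa> (leaves (graft_last U S)) (leaves U - 1 + p) g')"
proof -
  have vT: "dary d T" "dary d U" "leaves T = leaves U" using v by (auto simp: valid_triple_def)
  have r': "expands\<^sup>*\<^sup>* (T, g, U) (graft_last T S, g', graft_last U S)"
    "valid (graft_last T S, g', graft_last U S)"
    "fixes_from (leaves U) (graft_last T S, g', graft_last U S)" using r by (auto simp: tail_expansion_def)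
  note e = expansion_graft_last_fixing[OF vT dS r'(2,3) p]
  show ?thesis
    unfolding tail_expansion_def
      using r'(1) e valid_expansion[OF e(1)] by (auto intro: rtranclp.rtrancl_into_rtrancl)
qed

lemma tail_expansion_Lf: "valid (T, g, U) \<Longrightarrow> tail_expansion (T, g, U) Lf g"
proof -
  assume v: "valid (T, g, U)"
  have "\<rho> (leaves U) g (leaves U) = leaves U"
    using rho_fixes_last[OF valid_leaves_ge_1[OF v]] v by (simp add: valid_triple_def)
  then have "fixes_from (leaves U) (T, g, U)" by (auto simp: fixes_from_def right_tree_def)
  then show ?thesis using v by (simp add: tail_expansion_def graft_last_Lf)
qed

text \<open>Uniformity: the carets added at leaves p and \<open>p + d - 1\<close> of a new caret give the same group element.\<close>

lemma tail_expansion_uniform: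
  assumes v: "valid (T, g, U)" and r: "tail_expansion (T, g, U) S g'" and dS: "dary d S"
    and p: "1 \<le> p" "p \<le> leaves S"
  shows "\<exists>g1. tail_expansion (T, g, U) (add_caret d p (add_caret d p S)) g1 \<and>
              tail_expansion (T, g, U) (add_caret d (p + d - 1) (add_caret d p S)) g1"
proof -
  let ?N = "leaves U" and ?M = "leaves (graft_last U S)" and ?k = "leaves U - 1 + p"
  let ?S' = "add_caret d p S" and ?g'' = "\<kappa> ?M ?k g'"
  have d0: "0 < d" using d2 by simp
  have vT: "dary d T" "dary d U" "leaves T = leaves U" using v by (auto simp: valid_triple_def)
  have N: "1 \<le> ?N" using leaves_gt_0[OF d0 vT(2)] by simp
  have M: "?M + 1 = ?N + leaves S" using dary_graft_last(2)[OF d0 vT(2) dS] .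
  have r1: "tail_expansion (T, g, U) ?S' ?g''" using tail_expansion_add_caret[OF v r dS p] .
  have dS': "dary d ?S'" using dS by (rule dary_add_caret)
  have lS': "leaves ?S' = leaves S + d - 1" using p by (simp add: leaves_add_caret)
  have "leaves (graft_last U ?S') + 1 = ?N + leaves ?S'" using dary_graft_last(2)[OF d0 vT(2) dS'] .
  then have M': "leaves (graft_last U ?S') = ?M + d - 1" using lS' M N d2 by arith
  have p2: "1 \<le> p + d - 1" "p + d - 1 \<le> leaves ?S'" "p \<le> leaves ?S'" using p lS' d2 by auto
  have gc: "g' \<in> carrier (G ?M)" using r by (simp add: tail_expansion_def valid_triple_def)
  have k: "?k \<in> {1..?M}" using M N p by auto
  have "\<kappa> (?M + d - 1) ?k ?g'' = \<kappa> (?M + d - 1) (?k + d - 1) ?g''"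
    by (rule kappa_kappa_uniform[OF _ k _ _ _ gc]) (use k d2 in auto)
  moreover have "?N - 1 + (p + d - 1) = ?k + d - 1" using N p d2 by simp
  ultimately show ?thesis
    using tail_expansion_add_caret[OF v r1 dS' p(1) p2(3)] tail_expansion_add_caret[OF v r1 dS' p2(1,2)] M'
    by auto
qed

lemma tail_expansion_rcomb: "valid (T, g, U) \<Longrightarrow> \<exists>g'. tail_expansion (T, g, U) (rcomb d j Lf) g'"
proof (induction j)
  case 0
  then show ?case using tail_expansion_Lf by auto
next
  case (Suc j)
  then obtain g' where r: "tail_expansion (T, g, U) (rcomb d j Lf) g'" by blast
  have "tail_expansion (T, g, U) (add_caret d (j * (d - 1) + 1) (rcomb d j Lf))
      (\<kappa> (leaves (graft_last U (rcomb d j Lf))) (leaves U - 1 + (j * (d - 1) + 1)) g')"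
    by (rule tail_expansion_add_caret[OF Suc.prems r]) (use d2 in \<open>simp_all add: dary_rcomb leaves_rcomb\<close>)
  moreover have "1 \<le> d" using d2 by simp
  ultimately show ?case using rcomb_Suc_Lf[of d j] by auto
qed

lemma tail_expansion_spine_tree_Lf: "valid (T, g, U) \<Longrightarrow> \<exists>g'. tail_expansion (T, g, U) (spine_tree d j Lf) g'"
  using tail_expansion_rcomb[of T g U "Suc j"] spine_tree_Lf by simp

lemma add_caret_spine_tree_Lf: "add_caret d (j * (d - 1) + 1) (spine_tree d j Lf)
    = spine_tree d j (caret d)"
  using add_caret_spine_tree[of 1 Lf d j] by (simp add: caret_def)

lemma tail_expansion_seq_a_trees:
  assumes v: "valid (T, g, U)"
  shows "\<exists>g1. tail_expansion (T, g, U) (spine_tree d j (caret_first d)) g1 \<and>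
              tail_expansion (T, g, U) (spine_tree d j (caret_last d)) g1"
proof -
  obtain g0 where r0: "tail_expansion (T, g, U) (spine_tree d j Lf) g0"
    using tail_expansion_spine_tree_Lf[OF v] by blast
  let ?p = "j * (d - 1) + 1"
  have dw: "dary d (spine_tree d j Lf)" using dary_spine_tree d2 by simp
  have p: "1 \<le> ?p" "?p \<le> leaves (spine_tree d j Lf)" by (simp_all add: leaves_spine_tree)
  have "add_caret d ?p (spine_tree d j (caret d)) = spine_tree d j (caret_first d)"
    using add_caret_spine_tree[of 1 "caret d" d j] add_caret_caret_1[OF d2] d2 by simp
  moreover have "add_caret d (?p + d - 1) (spine_tree d j (caret d)) = spine_tree d j (caret_last d)"
    using add_caret_spine_tree[of d "caret d" d j] add_caret_caret_d[OF d2] d2 by (simp add: algebra_simps)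
  ultimately show ?thesis using tail_expansion_uniform[OF v r0 dw p] add_caret_spine_tree_Lf by simp
qed

lemma tail_expansion_seq_b_trees:
  assumes v: "valid (T, g, U)"
  shows "\<exists>g1. tail_expansion (T, g, U) (spine_tree d j (rcomb d 1 (caret_first d))) g1 \<and>
              tail_expansion (T, g, U) (spine_tree d j (rcomb d 1 (caret_last d))) g1"
proof -
  obtain g0 where r0: "tail_expansion (T, g, U) (spine_tree d j Lf) g0"
    using tail_expansion_spine_tree_Lf[OF v] by blast
  have "tail_expansion (T, g, U) (add_caret d (j * (d - 1) + 1) (spine_tree d j Lf))
      (\<kappa> (leaves (graft_last U (spine_tree d j Lf))) (leaves U - 1 + (j * (d - 1) + 1)) g0)"
    by (rule tail_expansion_add_caret[OF v r0 dary_spine_tree[OF d2]]) (simp_all add: leaves_spine_tree)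
  then obtain g2 where r2: "tail_expansion (T, g, U) (spine_tree d j (caret d)) g2"
    unfolding add_caret_spine_tree_Lf by blast
  let ?q = "j * (d - 1) + d"
  have dwc: "dary d (spine_tree d j (caret d))" using dary_spine_tree dary_caret d2 by simp
  have q: "1 \<le> ?q" "?q \<le> leaves (spine_tree d j (caret d))" using d2 by (auto simp: leaves_spine_tree)
  have "add_caret d ?q (spine_tree d j (caret d)) = spine_tree d j (caret_last d)"
    using add_caret_spine_tree[of d "caret d" d j] add_caret_caret_d[OF d2] d2 by simp
  moreover have "add_caret d ?q (spine_tree d j (caret_last d))
      = spine_tree d j (rcomb d 1 (caret_first d))"
    using add_caret_spine_tree[of d "caret_last d" d j] add_caret_caret_last_d[OF d2] d2 by simp
  moreover have "?q + d - 1 = j * (d - 1) + (2 * d - 1)" using d2 by simp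
  then have "add_caret d (?q + d - 1) (spine_tree d j (caret_last d))
      = spine_tree d j (rcomb d 1 (caret_last d))"
    using add_caret_spine_tree[of "2 * d - 1" "caret_last d" d j] add_caret_caret_last_last[OF d2] d2
      by simp
  ultimately show ?thesis using tail_expansion_uniform[OF v r2 dwc q] by simp
qed

lemma id_triple_graft_last_expansions:
  assumes "caret_ext_left d P Q" "dary d P" "dary d S1" "dary d S2" "leaves S1 = leaves S2"
  shows "expands\<^sup>*\<^sup>* (id_triple (graft_last P S1) (graft_last P S2)) (id_triple (graft_last Q S1) (graft_last Q S2))"
  using assms(1,2)
proof (induction rule: caret_ext_left.induct)
  case (caret_ext_left_step A B k)
  have d0: "0 < d" using d2 by simp
  have dB: "dary d B" using dary_caret_ext_left[OF caret_ext_left_step(1,5)] .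
  note g1 = dary_graft_last[OF d0 dB assms(3)] and g2 = dary_graft_last[OF d0 dB assms(4)]
  have v: "valid (id_triple (graft_last B S1) (graft_last B S2))"
    using valid_id_triple g1 g2 assms(5) by simp
  have k: "k \<in> {1..leaves (graft_last B S2)}"
    using caret_ext_left_step(2,3) g2(2) leaves_gt_0[OF d0 assms(4)] by auto
  have "expands (id_triple (graft_last B S1) (graft_last B S2))
      (expand (id_triple (graft_last B S1) (graft_last B S2)) k)"
    by (rule expansion_expand[OF v]) (use k in \<open>simp add: right_tree_def id_triple_def\<close>)
  then have "expands (id_triple (graft_last B S1) (graft_last B S2))
      (id_triple (add_caret d k (graft_last B S1)) (add_caret d k (graft_last B S2)))"
    unfolding expand_id_triple[OF k] .
  then have "expands (id_triple (graft_last B S1) (graft_last B S2))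
      (id_triple (graft_last (add_caret d k B) S1) (graft_last (add_caret d k B) S2))"
    using add_caret_graft_last_left[OF d0 dB assms(3) caret_ext_left_step(2,3)]
      add_caret_graft_last_left[OF d0 dB assms(4) caret_ext_left_step(2,3)] by simp
  then show ?case
    using caret_ext_left_step(4)[OF caret_ext_left_step(5)] by (rule rtranclp.rtrancl_into_rtrancl[rotated])
qed simp

lemma spine_class_eq_graft_last:
  assumes "dary d U" "delta_r U \<le> n" "dary d Z1" "dary d Z2" "leaves Z1 = leaves Z2"
  shows "spine_class n Z1 Z2 = cls (id_triple (graft_last U (spine_tree d (n - delta_r U) Z1))
                                              (graft_last U (spine_tree d (n - delta_r U) Z2)))"
proof -
  let ?m = "delta_r U" let ?S1 = "spine_tree d (n - ?m) Z1" and ?S2 = "spine_tree d (n - ?m) Z2"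
  have d0: "0 < d" using d2 by simp
  have "expands\<^sup>*\<^sup>* (id_triple (graft_last (rcomb d ?m Lf) ?S1) (graft_last (rcomb d ?m Lf) ?S2))
      (id_triple (graft_last U ?S1) (graft_last U ?S2))"
    using id_triple_graft_last_expansions[OF caret_ext_left_rcomb_delta_r[OF d0 assms(1)] dary_rcomb[OF d0]]
      dary_spine_tree[OF d2] assms(3-5) by (simp add: leaves_spine_tree)
  then show ?thesis
    unfolding spine_class_def spine_tree_eq_graft_last[OF assms(2)] cls_eq_iff
      by (rule rtranclp_into_equivclp)
qed

text \<open>Over the trees \<open>graft_last U S\<^sub>i\<close>, the spine class only acts on the grafted parts and
  the tail expansion of \<open>(T, g, U)\<close> only outside them.\<close>

lemma commute_spine_class:
  assumes v: "valid (T, g, U)" and dT: "delta_r T = delta_r U" and mn: "delta_r U \<le> n"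
    and r1: "tail_expansion (T, g, U) (spine_tree d (n - delta_r U) Z1) g1"
    and r2: "tail_expansion (T, g, U) (spine_tree d (n - delta_r U) Z2) g1"
    and dZ: "dary d Z1" "dary d Z2" "leaves Z1 = leaves Z2"
  shows "tmul (cls (T, g, U)) (spine_class n Z1 Z2) = tmul (spine_class n Z1 Z2) (cls (T, g, U))"
proof -
  have d0: "0 < d" using d2 by simp
  have vT: "dary d T" "dary d U" "leaves T = leaves U" using v by (auto simp: valid_triple_def)
  let ?S1 = "spine_tree d (n - delta_r U) Z1" and ?S2 = "spine_tree d (n - delta_r U) Z2"
  have dS: "dary d ?S1" "dary d ?S2" using dary_spine_tree dZ d2 by auto
  have lS: "leaves ?S1 = leaves ?S2" using dZ by (simp add: leaves_spine_tree)
  have eU: "spine_class n Z1 Z2 = cls (id_triple (graft_last U ?S1) (graft_last U ?S2))"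
    using spine_class_eq_graft_last[OF vT(2) mn dZ] .
  have eT: "spine_class n Z1 Z2 = cls (id_triple (graft_last T ?S1) (graft_last T ?S2))"
    using spine_class_eq_graft_last[OF vT(1) mn[folded dT] dZ] unfolding dT .
  let ?x1 = "(graft_last T ?S1, g1, graft_last U ?S1)" and ?x2 = "(graft_last T ?S2, g1, graft_last U ?S2)"
  have x: "cls (T, g, U) = cls ?x1" "cls (T, g, U) = cls ?x2" "valid ?x1" "valid ?x2"
    using r1 r2 by (auto simp: tail_expansion_def cls_eq_iff intro: rtranclp_into_equivclp)
  note gU1 = dary_graft_last[OF d0 vT(2) dS(1)] and gU2 = dary_graft_last[OF d0 vT(2) dS(2)]
  note gT1 = dary_graft_last[OF d0 vT(1) dS(1)] and gT2 = dary_graft_last[OF d0 vT(1) dS(2)]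
  have L: "leaves (graft_last U ?S2) = leaves (graft_last U ?S1)"
    "leaves (graft_last T ?S2) = leaves (graft_last U ?S1)"
    "leaves (graft_last T ?S1) = leaves (graft_last U ?S1)"
    using gU1(2) gU2(2) gT2(2) gT1(2) lS vT(3) by auto
  have vy: "valid (id_triple (graft_last U ?S1) (graft_last U ?S2))"
    "valid (id_triple (graft_last T ?S1) (graft_last T ?S2))"
    using valid_id_triple gU1 gU2 gT1 gT2 L by auto
  interpret group "G (leaves (graft_last U ?S1))" using group_G valid_leaves_ge_1[OF x(3)] .
  have g1: "g1 \<in> carrier (G (leaves (graft_last U ?S1)))" using x(3) by (simp add: valid_triple_def)
  have "tmul (cls (T, g, U)) (spine_class n Z1 Z2) = cls (graft_last T ?S1, g1, graft_last U ?S2)"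
    unfolding eU x(1) using Td_mult_cls[OF x(3) vy(1)] g1 L
    by (simp add: right_tree_def id_triple_def mult_triple_def)
  also have "\<dots> = tmul (spine_class n Z1 Z2) (cls (T, g, U))"
    unfolding eT x(2) using Td_mult_cls[OF vy(2) x(4)] g1 L
    by (simp add: right_tree_def id_triple_def mult_triple_def)
  finally show ?thesis .
qed

lemma seqs_eventually_commute:
  assumes "h \<in> Dd_carrier d G \<rho> \<kappa>"
  shows "finite {n. tmul h (seq_a n) \<noteq> tmul (seq_a n) h \<or> tmul h (seq_b n) \<noteq> tmul (seq_b n) h}"
proof -
  obtain T g U where h: "h = cls (T, g, U)" "valid (T, g, U)" "delta_r T = delta_r U"
    using assms unfolding Dd_carrier_def by blast
  have "tmul h (seq_a n) = tmul (seq_a n) h \<and> tmul h (seq_b n) = tmul (seq_b n) h" if "delta_r U \<le> n" for n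
  proof -
    obtain g1 where a: "tail_expansion (T, g, U) (spine_tree d (n - delta_r U) (caret_first d)) g1"
      "tail_expansion (T, g, U) (spine_tree d (n - delta_r U) (caret_last d)) g1"
      using tail_expansion_seq_a_trees[OF h(2)] by blast
    obtain g2 where b: "tail_expansion (T, g, U) (spine_tree d (n - delta_r U) (rcomb d 1 (caret_first d))) g2"
      "tail_expansion (T, g, U) (spine_tree d (n - delta_r U) (rcomb d 1 (caret_last d))) g2"
      using tail_expansion_seq_b_trees[OF h(2)] by blast
    show ?thesis
      unfolding h(1) seq_a_def seq_b_def
      using commute_spine_class[OF h(2,3) that a] commute_spine_class[OF h(2,3) that b] d2
      by (simp del: rcomb.simps add: dary_trees leaves_rcomb)
  qed
  then have "{n. tmul h (seq_a n) \<noteq> tmul (seq_a n) h \<or> tmul h (seq_b n) \<noteq> tmul (seq_b n) h} \<subseteq> {..<delta_r U}"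
    by (auto simp: not_less)
  then show ?thesis by (rule finite_subset) simp
qed

lemma seq_a_in_Dd: "seq_a n \<in> Dd_carrier d G \<rho> \<kappa>"
  unfolding seq_a_def using d2 by (intro spine_class_in_Dd) (simp_all add: dary_trees)

lemma seq_b_in_Dd: "seq_b n \<in> Dd_carrier d G \<rho> \<kappa>"
  unfolding seq_b_def
    using d2 by (intro spine_class_in_Dd) (simp_all del: rcomb.simps add: dary_trees leaves_rcomb)

end

theorem lemma3p4:
  fixes d :: nat and G :: "nat \<Rightarrow> 'g monoid" and \<rho> :: "nat \<Rightarrow> 'g \<Rightarrow> nat \<Rightarrow> nat"
    and \<kappa> :: "nat \<Rightarrow> nat \<Rightarrow> 'g \<Rightarrow> 'g"
  assumes "d \<ge> 2"
    and "cloning_system d G \<rho> \<kappa>"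
    and "fully_compatible d G \<rho> \<kappa>"
    and "slightly_pure G \<rho>"
    and "uniform d G \<kappa>"
  shows "\<exists>a b :: nat \<Rightarrow> 'g triple set.
           (\<forall>n. a n \<in> Dd_carrier d G \<rho> \<kappa> \<and> b n \<in> Dd_carrier d G \<rho> \<kappa> \<and>
                Td_mult d G \<rho> \<kappa> (a n) (b n) \<noteq> Td_mult d G \<rho> \<kappa> (b n) (a n)) \<and>
           (\<forall>h\<in>Dd_carrier d G \<rho> \<kappa>.
              finite {n. Td_mult d G \<rho> \<kappa> h (a n) \<noteq> Td_mult d G \<rho> \<kappa> (a n) h \<or>
                         Td_mult d G \<rho> \<kappa> h (b n) \<noteq> Td_mult d G \<rho> \<kappa> (b n) h})"
proof -
  interpret cloning_setting d G \<rho> \<kappa> using assms by unfold_locales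
  show ?thesis
    using seq_a_in_Dd seq_b_in_Dd seq_a_seq_b_not_commute seqs_eventually_commute
    by (intro exI[of _ seq_a] exI[of _ seq_b]) blast
qed

end
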